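(* Let $k,l\geq 1$ and let $S_{k,l}$ be the double star, and let $p(x)=x(x-k-1)(x-l-1)-(x-1)(x-k-1)-(x-1)(x-l-1)$. (1) Let $v$ be the vertex of $S_{k,l}$ of degree $k+1$. Then $\uparrow^{2}S_{k,l}$ has Laplacian pretty good state transfer between $(0,v)$ and $(1,v)$ if and only if $p(x)$ is irreducible over $\mathbb{Q}$ and $\nu_2(k+1)=\nu_2(l+3)$. (2) Let $w$ be a leaf of $S_{k,l}$ attached to the vertex of degree $l+1$. Then $\uparrow^{2}S_{k,l}$ has Laplacian pretty good state transfer between $(0,w)$ and $(1,w)$ if and only if $l=1$, $k$ is odd, and either $p(x)$ is irreducible over $\mathbb{Q}$ or $p(x)$ has a root that is an even integer.
   Context: The double star $S_{k,l}$ is the tree obtained from $K_2$ (with vertices $x,y$) by attaching $k$ pendent vertices to $x$ and $l$ pendent vertices to $y$; its Laplacian characteristic polynomial is $x(x-1)^{k+l-2}p(x)$. For a nonzero integer $n$, $\nu_2(n)$ is the exponent of the largest power of $2$ dividing $n$. The blow-up $\uparrow^{2}G$ has vertex set $\mathbb{Z}_2\times V(G)$, with $(a,u)\sim(b,v)$ iff $u\sim v$ in $G$. A graph with Laplacian $L=D-A$ has Laplacian pretty good state transfer between vertices $a,b$ if there exist $\{t_k\}\subseteq\mathbb{R}$ and $\gamma\in\mathbb{C}$ with $\lim_{k\to\infty}\exp(it_kL)\mathbf{e}_a=\gamma\mathbf{e}_b$. *)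

theory Defs
  imports Complex_Main "HOL-Computational_Algebra.Polynomial" "HOL-Computational_Algebra.Factorial_Ring"
begin

text \<open>A finite simple graph: a finite vertex set V and a symmetric, irreflexive
adjacency relation adj (only its restriction to V matters).
Matrices indexed by V are functions 'a => 'a => complex.\<close>

definition degree :: "'a set \<Rightarrow> ('a \<Rightarrow> 'a \<Rightarrow> bool) \<Rightarrow> 'a \<Rightarrow> nat" where
  "degree V adj u = card {w \<in> V. adj u w}"

definition laplacian :: "'a set \<Rightarrow> ('a \<Rightarrow> 'a \<Rightarrow> bool) \<Rightarrow> 'a \<Rightarrow> 'a \<Rightarrow> complex" where
  "laplacian V adj u v =
     (if u = v then of_nat (degree V adj u) else 0) - (if adj u v then 1 else 0)"

fun mat_pow :: "'a set \<Rightarrow> ('a \<Rightarrow> 'a \<Rightarrow> complex) \<Rightarrow> nat \<Rightarrow> 'a \<Rightarrow> 'a \<Rightarrow> complex" where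
  "mat_pow V M 0 u v = (if u = v then 1 else 0)"
| "mat_pow V M (Suc n) u v = (\<Sum>w\<in>V. M u w * mat_pow V M n w v)"

definition mat_exp :: "'a set \<Rightarrow> ('a \<Rightarrow> 'a \<Rightarrow> complex) \<Rightarrow> 'a \<Rightarrow> 'a \<Rightarrow> complex" where
  "mat_exp V M u v = (\<Sum>n. mat_pow V M n u v / of_nat (fact n))"

definition laplacian_pgst :: "'a set \<Rightarrow> ('a \<Rightarrow> 'a \<Rightarrow> bool) \<Rightarrow> 'a \<Rightarrow> 'a \<Rightarrow> bool" where
  "laplacian_pgst V adj a b \<longleftrightarrow>
     (\<exists>(t :: nat \<Rightarrow> real) (\<gamma> :: complex). \<forall>u\<in>V.
        (\<lambda>j. mat_exp V (\<lambda>x y. \<i> * of_real (t j) * laplacian V adj x y) u a)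
          \<longlonglongrightarrow> (if u = b then \<gamma> else 0))"

text \<open>Double star S_{k,l} on vertices {0..k+l+1}: x = 0, y = 1,
  leaves 2..k+1 attached to x, leaves k+2..k+l+1 attached to y.\<close>
definition dstar_V :: "nat \<Rightarrow> nat \<Rightarrow> nat set" where
  "dstar_V k l = {0..k+l+1}"

definition dstar_edge :: "nat \<Rightarrow> nat \<Rightarrow> nat \<Rightarrow> nat \<Rightarrow> bool" where
  "dstar_edge k l u v \<longleftrightarrow>
     (u = 0 \<and> v = 1) \<or> (u = 0 \<and> 2 \<le> v \<and> v \<le> k + 1) \<or> (u = 1 \<and> k + 2 \<le> v \<and> v \<le> k + l + 1)"

definition dstar_adj :: "nat \<Rightarrow> nat \<Rightarrow> nat \<Rightarrow> nat \<Rightarrow> bool" where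
  "dstar_adj k l u v \<longleftrightarrow> dstar_edge k l u v \<or> dstar_edge k l v u"

text \<open>Blow-up: vertex set Z_2 x V(G) (Z_2 represented as {0,1}),
  (a,u) ~ (b,v) iff u ~ v in G.\<close>
definition blowup2_V :: "'a set \<Rightarrow> (nat \<times> 'a) set" where
  "blowup2_V V = {0, 1} \<times> V"

definition blowup2_adj :: "('a \<Rightarrow> 'a \<Rightarrow> bool) \<Rightarrow> nat \<times> 'a \<Rightarrow> nat \<times> 'a \<Rightarrow> bool" where
  "blowup2_adj adj p q \<longleftrightarrow> adj (snd p) (snd q)"

definition dstar_p :: "nat \<Rightarrow> nat \<Rightarrow> rat poly" where
  "dstar_p k l =
     [:0, 1:] * [:- of_nat (k+1), 1:] * [:- of_nat (l+1), 1:]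
     - [:-1, 1:] * [:- of_nat (k+1), 1:] - [:-1, 1:] * [:- of_nat (l+1), 1:]"

end

(* The double cover of a graph G carries the lifts h \<circ> snd of the Laplacian eigenvectors h of G, with
   doubled eigenvalues, and the antisymmetric vectors e(0,v) - e(1,v), with eigenvalue 2 deg v.  Hence
   transfer from (0,v) to (1,v) at times t amounts to exp(2 i t deg v) -> -1 together with
   exp(2 i t \<theta>) -> 1 for every eigenvalue \<theta> of G having an eigenvector that does not vanish at v.

   For the double star, the vectors constant on {x}, {y}, the leaves at x and the leaves at y form an
   invariant subspace on which the Laplacian acts by a 4 x 4 matrix with characteristic polynomial x p(x);
   decomposing e_v inside it, the relevant eigenvalues are 0 and the roots a, b, c of p, together with
   the eigenvalue 1 of the difference of two leaves at y (which exists, and rules out transfer at a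
   leaf, as soon as l > 1).  If p is irreducible, the only rational relation between its roots is
   a + b + c = k + l + 4, so by Kronecker's theorem their phases can be steered to 1 while the phase of
   the degree d goes to -1, which is compatible with a + b + c = d + e exactly when d and e have the same
   2-adic valuation.  If p is reducible then k = l and k + 1 is a root, which blocks transfer at the
   centre; at a leaf with k = l = 1 the roots are 2 and 2 \<plusminus> sqrt 2, and Kronecker's theorem for
   1 and sqrt 2 gives the times. *)

theory Submission
  imports Defs "HOL-Analysis.Kronecker_Approximation_Theorem"
begin

section \<open>Matrices indexed by a finite set\<close>

definition mat_mult_vec :: "'a set \<Rightarrow> ('a \<Rightarrow> 'a \<Rightarrow> complex) \<Rightarrow> ('a \<Rightarrow> complex) \<Rightarrow> 'a \<Rightarrow> complex" where
  "mat_mult_vec V M \<phi> u = (\<Sum>w\<in>V. M u w * \<phi> w)"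

text \<open>Zero is allowed, so that eigen-decompositions may have vanishing components.\<close>
definition in_eigenspace :: "'a set \<Rightarrow> ('a \<Rightarrow> 'a \<Rightarrow> complex) \<Rightarrow> complex \<Rightarrow> ('a \<Rightarrow> complex) \<Rightarrow> bool" where
  "in_eigenspace V M \<mu> \<phi> \<longleftrightarrow> (\<forall>u\<in>V. mat_mult_vec V M \<phi> u = \<mu> * \<phi> u)"

lemma in_eigenspace_scale:
  "in_eigenspace V M \<mu> \<phi> \<Longrightarrow> in_eigenspace V (\<lambda>x y. c * M x y) (c * \<mu>) \<phi>"
  unfolding in_eigenspace_def mat_mult_vec_def by (metis (no_types, lifting) mult.assoc sum.cong sum_distrib_left)

lemma norm_mat_pow_le:
  assumes "finite V" "u \<in> V" and B: "\<And>x w. x \<in> V \<Longrightarrow> w \<in> V \<Longrightarrow> norm (M x w) \<le> B"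
  shows "norm (mat_pow V M n u v) \<le> (real (card V) * B) ^ n"
  using \<open>u \<in> V\<close>
proof (induction n arbitrary: u)
  case 0
  then show ?case by simp
next
  case (Suc n)
  have "0 \<le> B" using B[OF Suc.prems Suc.prems] norm_ge_zero order_trans by blast
  have "norm (mat_pow V M (Suc n) u v) \<le> (\<Sum>w\<in>V. norm (M u w) * norm (mat_pow V M n w v))"
    by (simp add: norm_sum norm_mult sum_norm_le)
  also have "\<dots> \<le> (\<Sum>w\<in>V. B * (real (card V) * B) ^ n)"
    using Suc B \<open>0 \<le> B\<close> by (intro sum_mono mult_mono) auto
  finally show ?case by simp
qed

lemma summable_mat_exp_series:
  assumes "finite V" "u \<in> V"
  shows "summable (\<lambda>n. mat_pow V M n u v / of_nat (fact n))"
proof -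
  define B where "B = Max ((\<lambda>(x, w). norm (M x w)) ` (V \<times> V))"
  have B: "norm (M x w) \<le> B" if "x \<in> V" "w \<in> V" for x w
    unfolding B_def using assms(1) that by (intro Max_ge) auto
  show ?thesis
  proof (rule summable_comparison_test')
    show "summable (\<lambda>n. (real (card V) * B) ^ n / fact n)"
      using summable_exp_generic[of "real (card V) * B"] by (simp add: divide_inverse mult.commute)
    show "norm (mat_pow V M n u v / of_nat (fact n)) \<le> (real (card V) * B) ^ n / fact n" for n
      using norm_mat_pow_le[OF assms B] by (simp add: norm_divide divide_right_mono)
  qed
qed

lemma sums_exp_complex: "(\<lambda>n. (z::complex) ^ n / of_nat (fact n)) sums exp z"
  using exp_converges[of z] by (simp add: scaleR_conv_of_real divide_inverse mult.commute)

lemma mat_pow_eigen_expansion: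
  assumes init: "\<And>x. x \<in> V \<Longrightarrow> (\<Sum>j\<in>J. \<phi> j x) = (if x = a then 1 else 0)"
    and eig: "\<And>j. j \<in> J \<Longrightarrow> in_eigenspace V M (\<mu> j) (\<phi> j)" and "u \<in> V"
  shows "mat_pow V M n u a = (\<Sum>j\<in>J. \<mu> j ^ n * \<phi> j u)"
  using \<open>u \<in> V\<close>
proof (induction n arbitrary: u)
  case 0
  then show ?case using init by simp
next
  case (Suc n)
  have "mat_pow V M (Suc n) u a = (\<Sum>j\<in>J. \<mu> j ^ n * mat_mult_vec V M (\<phi> j) u)"
    using Suc by (simp add: mat_mult_vec_def sum_distrib_left mult_ac sum.swap[of _ V])
  also have "\<dots> = (\<Sum>j\<in>J. \<mu> j ^ Suc n * \<phi> j u)"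
    using eig Suc.prems by (intro sum.cong) (auto simp: in_eigenspace_def)
  finally show ?case .
qed

lemma mat_exp_eigen_expansion:
  assumes "finite J"
    and "\<And>x. x \<in> V \<Longrightarrow> (\<Sum>j\<in>J. \<phi> j x) = (if x = a then 1 else 0)"
    and "\<And>j. j \<in> J \<Longrightarrow> in_eigenspace V M (\<mu> j) (\<phi> j)" and "u \<in> V"
  shows "mat_exp V M u a = (\<Sum>j\<in>J. exp (\<mu> j) * \<phi> j u)"
proof -
  have "(\<lambda>n. \<Sum>j\<in>J. \<mu> j ^ n / of_nat (fact n) * \<phi> j u) sums (\<Sum>j\<in>J. exp (\<mu> j) * \<phi> j u)"
    using \<open>finite J\<close> by (intro sums_sum sums_mult2 sums_exp_complex)
  moreover have "(\<Sum>j\<in>J. \<mu> j ^ n / of_nat (fact n) * \<phi> j u) = mat_pow V M n u a / of_nat (fact n)" for n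
    using mat_pow_eigen_expansion[OF assms(2-4), of n] by (simp add: sum_divide_distrib)
  ultimately show ?thesis
    unfolding mat_exp_def by (simp add: sums_iff)
qed

lemma mat_pow_column_inner_eigenvector:
  assumes "finite V" "a \<in> V" and sym: "\<And>x w. x \<in> V \<Longrightarrow> w \<in> V \<Longrightarrow> M x w = M w x"
    and eig: "in_eigenspace V M \<mu> \<phi>"
  shows "(\<Sum>u\<in>V. mat_pow V M n u a * \<phi> u) = \<mu> ^ n * \<phi> a"
proof (induction n)
  case 0
  have "(\<Sum>u\<in>V. mat_pow V M 0 u a * \<phi> u) = (\<Sum>u\<in>V. if u = a then \<phi> u else 0)"
    by (intro sum.cong) auto
  also have "\<dots> = \<phi> a"
    using assms(1,2) by (subst sum.delta) auto
  finally show ?case by (simp only: power_0 mult_1)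
next
  case (Suc n)
  have "(\<Sum>u\<in>V. mat_pow V M (Suc n) u a * \<phi> u) = (\<Sum>u\<in>V. \<Sum>w\<in>V. M u w * mat_pow V M n w a * \<phi> u)"
    by (simp add: sum_distrib_right)
  also have "\<dots> = (\<Sum>w\<in>V. \<Sum>u\<in>V. mat_pow V M n w a * (M w u * \<phi> u))"
    by (subst sum.swap) (auto simp: sym mult_ac intro!: sum.cong)
  also have "\<dots> = (\<Sum>w\<in>V. mat_pow V M n w a * mat_mult_vec V M \<phi> w)"
    by (simp add: mat_mult_vec_def sum_distrib_left)
  also have "\<dots> = \<mu> * (\<Sum>w\<in>V. mat_pow V M n w a * \<phi> w)"
    using eig by (simp add: in_eigenspace_def sum_distrib_left mult_ac)
  finally show ?case using Suc by simp
qed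

lemma mat_exp_column_inner_eigenvector:
  assumes "finite V" "a \<in> V" "\<And>x w. x \<in> V \<Longrightarrow> w \<in> V \<Longrightarrow> M x w = M w x"
    and "in_eigenspace V M \<mu> \<phi>"
  shows "(\<Sum>u\<in>V. mat_exp V M u a * \<phi> u) = exp \<mu> * \<phi> a"
proof -
  have "(\<lambda>n. \<Sum>u\<in>V. mat_pow V M n u a / of_nat (fact n) * \<phi> u) sums (\<Sum>u\<in>V. mat_exp V M u a * \<phi> u)"
    unfolding mat_exp_def
    by (intro sums_sum sums_mult2 summable_sums summable_mat_exp_series[OF assms(1)])
  moreover have "(\<Sum>u\<in>V. mat_pow V M n u a / of_nat (fact n) * \<phi> u) = \<mu> ^ n / of_nat (fact n) * \<phi> a" for n
  proof -
    have "(\<Sum>u\<in>V. mat_pow V M n u a / of_nat (fact n) * \<phi> u) = (\<Sum>u\<in>V. mat_pow V M n u a * \<phi> u) / of_nat (fact n)"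
      by (simp add: sum_divide_distrib)
    then show ?thesis
      using mat_pow_column_inner_eigenvector[OF assms, of n] by simp
  qed
  ultimately have "(\<lambda>n. \<mu> ^ n / of_nat (fact n) * \<phi> a) sums (\<Sum>u\<in>V. mat_exp V M u a * \<phi> u)"
    by (simp only:)
  then show ?thesis
    using sums_mult2[OF sums_exp_complex] by (rule sums_unique2)
qed

definition shifted_mult_vec :: "'a set \<Rightarrow> ('a \<Rightarrow> 'a \<Rightarrow> complex) \<Rightarrow> complex \<Rightarrow> ('a \<Rightarrow> complex) \<Rightarrow> 'a \<Rightarrow> complex" where
  "shifted_mult_vec V M y \<phi> u = mat_mult_vec V M \<phi> u - y * \<phi> u"

lemma mat_mult_vec_diff: "mat_mult_vec V M (\<lambda>w. f w - g w) u = mat_mult_vec V M f u - mat_mult_vec V M g u"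
  by (simp add: mat_mult_vec_def algebra_simps sum_subtractf)

lemma mat_mult_vec_add: "mat_mult_vec V M (\<lambda>w. f w + g w) u = mat_mult_vec V M f u + mat_mult_vec V M g u"
  by (simp add: mat_mult_vec_def algebra_simps sum.distrib)

lemma mat_mult_vec_scale: "mat_mult_vec V M (\<lambda>w. c * f w) u = c * mat_mult_vec V M f u"
  by (simp add: mat_mult_vec_def sum_distrib_left mult.left_commute)

lemma mat_mult_vec_divide: "mat_mult_vec V M (\<lambda>w. f w / c) u = mat_mult_vec V M f u / c"
  by (simp add: mat_mult_vec_def sum_divide_distrib)

lemma mat_mult_vec_sum: "mat_mult_vec V M (\<lambda>w. \<Sum>y\<in>Y. f y w) u = (\<Sum>y\<in>Y. mat_mult_vec V M (f y) u)"
  by (simp add: mat_mult_vec_def sum_distrib_left sum.swap[of _ Y])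

text \<open>A vector annihilated by \<open>\<Prod>\<^sub>y (M - y)\<close> over distinct \<open>y\<close> is a sum of eigenvectors for these \<open>y\<close>:
  peeling off the factor \<open>M - y\<^sub>0\<close>, the components for the other \<open>y\<close> are those of \<open>(M - y\<^sub>0) \<phi>\<close>
  divided by \<open>y - y\<^sub>0\<close>, and what remains of \<open>\<phi>\<close> lies in the \<open>y\<^sub>0\<close>-eigenspace.\<close>

lemma eigenspace_decomposition:
  assumes "distinct ys" and "\<forall>u\<in>V. fold (shifted_mult_vec V M) ys \<phi> u = 0"
  shows "\<exists>\<psi>. (\<forall>u\<in>V. \<phi> u = (\<Sum>y\<in>set ys. \<psi> y u)) \<and> (\<forall>y\<in>set ys. in_eigenspace V M y (\<psi> y))"
  using assms
proof (induction ys arbitrary: \<phi>)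
  case Nil
  then show ?case by simp
next
  case (Cons y\<^sub>0 ys)
  define \<phi>' where "\<phi>' = shifted_mult_vec V M y\<^sub>0 \<phi>"
  obtain \<psi>' where dec: "\<forall>u\<in>V. \<phi>' u = (\<Sum>y\<in>set ys. \<psi>' y u)" and eig: "\<forall>y\<in>set ys. in_eigenspace V M y (\<psi>' y)"
    using Cons.IH[of \<phi>'] Cons.prems by (auto simp: \<phi>'_def)
  define \<xi> where "\<xi> y u = \<psi>' y u / (y - y\<^sub>0)" for y u
  define \<psi> where "\<psi> y = (if y = y\<^sub>0 then (\<lambda>u. \<phi> u - (\<Sum>z\<in>set ys. \<xi> z u)) else \<xi> y)" for y
  have y\<^sub>0: "y\<^sub>0 \<notin> set ys"
    using Cons.prems(1) by simp
  have "in_eigenspace V M y\<^sub>0 (\<psi> y\<^sub>0)"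
    unfolding in_eigenspace_def
  proof
    fix u assume "u \<in> V"
    have "mat_mult_vec V M (\<xi> z) u = z * \<xi> z u" if "z \<in> set ys" for z
      using eig that \<open>u \<in> V\<close> by (simp add: \<xi>_def[abs_def] in_eigenspace_def mat_mult_vec_divide)
    then have "mat_mult_vec V M (\<psi> y\<^sub>0) u - y\<^sub>0 * \<psi> y\<^sub>0 u = \<phi>' u - (\<Sum>z\<in>set ys. (z - y\<^sub>0) * \<xi> z u)"
      by (simp add: \<psi>_def \<phi>'_def shifted_mult_vec_def mat_mult_vec_diff mat_mult_vec_sum algebra_simps sum_subtractf sum_distrib_left)
    also have "\<dots> = 0"
      using dec \<open>u \<in> V\<close> y\<^sub>0 by (auto simp: \<xi>_def intro!: sum.cong)
    finally show "mat_mult_vec V M (\<psi> y\<^sub>0) u = y\<^sub>0 * \<psi> y\<^sub>0 u" by simp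
  qed
  moreover have "in_eigenspace V M y (\<psi> y)" if "y \<in> set ys" for y
    using eig that y\<^sub>0 by (auto simp: \<psi>_def \<xi>_def[abs_def] in_eigenspace_def mat_mult_vec_divide)
  moreover have "\<phi> u = (\<Sum>y\<in>set (y\<^sub>0 # ys). \<psi> y u)" for u
  proof -
    have "(\<Sum>y\<in>set ys. \<psi> y u) = (\<Sum>z\<in>set ys. \<xi> z u)"
      using y\<^sub>0 by (intro sum.cong) (auto simp: \<psi>_def)
    then show ?thesis
      using y\<^sub>0 by (simp add: \<psi>_def)
  qed
  ultimately show ?case
    by auto
qed

lemma fold_shifted_mult_vec_four:
  fixes V :: "'a set" and M :: "'a \<Rightarrow> 'a \<Rightarrow> complex"
  defines "A \<equiv> mat_mult_vec V M"
  shows "fold (shifted_mult_vec V M) [y\<^sub>0, y\<^sub>1, y\<^sub>2, y\<^sub>3] \<phi> u =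
     A (A (A (A \<phi>))) u - (y\<^sub>0 + y\<^sub>1 + y\<^sub>2 + y\<^sub>3) * A (A (A \<phi>)) u
     + (y\<^sub>0 * y\<^sub>1 + y\<^sub>0 * y\<^sub>2 + y\<^sub>0 * y\<^sub>3 + y\<^sub>1 * y\<^sub>2 + y\<^sub>1 * y\<^sub>3 + y\<^sub>2 * y\<^sub>3) * A (A \<phi>) u
     - (y\<^sub>0 * y\<^sub>1 * y\<^sub>2 + y\<^sub>0 * y\<^sub>1 * y\<^sub>3 + y\<^sub>0 * y\<^sub>2 * y\<^sub>3 + y\<^sub>1 * y\<^sub>2 * y\<^sub>3) * A \<phi> u
     + y\<^sub>0 * y\<^sub>1 * y\<^sub>2 * y\<^sub>3 * \<phi> u"
  unfolding A_def
  by (simp add: shifted_mult_vec_def[abs_def] mat_mult_vec_diff mat_mult_vec_add mat_mult_vec_scale algebra_simps)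

section \<open>Laplacian state transfer through eigenvectors\<close>

lemma laplacian_mult_vec:
  assumes "finite V" "u \<in> V"
  shows "mat_mult_vec V (laplacian V adj) h u = of_nat (degree V adj u) * h u - (\<Sum>w\<in>{w\<in>V. adj u w}. h w)"
proof -
  have "mat_mult_vec V (laplacian V adj) h u
      = (\<Sum>w\<in>V. if u = w then of_nat (degree V adj u) * h w else 0) - (\<Sum>w\<in>V. if adj u w then h w else 0)"
    unfolding mat_mult_vec_def laplacian_def sum_subtractf[symmetric] by (intro sum.cong) (auto simp: algebra_simps)
  then show ?thesis
    using assms by (simp add: sum.inter_filter)
qed

lemma in_eigenspace_laplacian_const: "finite V \<Longrightarrow> in_eigenspace V (laplacian V adj) 0 (\<lambda>_. 1)"
  by (simp add: in_eigenspace_def laplacian_mult_vec degree_def)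

definition vertex_diff :: "'a \<Rightarrow> 'a \<Rightarrow> 'a \<Rightarrow> complex" where
  "vertex_diff a b w = (if w = a then 1 else if w = b then -1 else 0)"

lemma in_eigenspace_laplacian_vertex_diff:
  assumes "finite V" "a \<in> V" "b \<in> V" "a \<noteq> b"
    and twins: "\<And>u. u \<in> V \<Longrightarrow> adj u a \<longleftrightarrow> adj u b"
    and deg: "degree V adj a = degree V adj b"
  shows "in_eigenspace V (laplacian V adj) (of_nat (degree V adj a)) (vertex_diff a b)"
  unfolding in_eigenspace_def
proof
  fix u assume "u \<in> V"
  have "mat_mult_vec V (laplacian V adj) (vertex_diff a b) u = laplacian V adj u a - laplacian V adj u b"
    using assms(1-4) by (simp add: mat_mult_vec_def vertex_diff_def if_distrib[of "\<lambda>x. _ * x"] sum.If_cases)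
  also have "\<dots> = of_nat (degree V adj a) * vertex_diff a b u"
    using twins[OF \<open>u \<in> V\<close>] twins[OF assms(2)] twins[OF assms(3)] deg \<open>a \<noteq> b\<close>
    by (auto simp: laplacian_def vertex_diff_def)
  finally show "mat_mult_vec V (laplacian V adj) (vertex_diff a b) u = of_nat (degree V adj a) * vertex_diff a b u" .
qed

lemma laplacian_sym: "(\<And>x y. adj x y \<longleftrightarrow> adj y x) \<Longrightarrow> laplacian V adj x y = laplacian V adj y x"
  by (auto simp: laplacian_def)

lemma laplacian_pgst_imp_eigenphases:
  assumes "finite V" "a \<in> V" "b \<in> V" and sym: "\<And>x y. adj x y \<longleftrightarrow> adj y x"
    and "laplacian_pgst V adj a b"
  obtains t :: "nat \<Rightarrow> real" and \<gamma> where
    "\<And>\<mu> \<phi>. in_eigenspace V (laplacian V adj) (of_real \<mu>) \<phi> \<Longrightarrow>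
       (\<lambda>j. exp (\<i> * of_real (t j * \<mu>)) * \<phi> a) \<longlonglongrightarrow> \<gamma> * \<phi> b"
proof -
  obtain t \<gamma> where lim: "\<And>u. u \<in> V \<Longrightarrow>
      (\<lambda>j. mat_exp V (\<lambda>x y. \<i> * of_real (t j) * laplacian V adj x y) u a) \<longlonglongrightarrow> (if u = b then \<gamma> else 0)"
    using assms(5) unfolding laplacian_pgst_def by blast
  have "(\<lambda>j. exp (\<i> * of_real (t j * \<mu>)) * \<phi> a) \<longlonglongrightarrow> \<gamma> * \<phi> b"
    if eig: "in_eigenspace V (laplacian V adj) (of_real \<mu>) \<phi>" for \<mu> \<phi>
  proof -
    have "(\<lambda>j. \<Sum>u\<in>V. mat_exp V (\<lambda>x y. \<i> * of_real (t j) * laplacian V adj x y) u a * \<phi> u)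
        \<longlonglongrightarrow> (\<Sum>u\<in>V. (if u = b then \<gamma> else 0) * \<phi> u)"
      by (intro tendsto_sum tendsto_mult_right lim)
    moreover have "(\<Sum>u\<in>V. (if u = b then \<gamma> else 0) * \<phi> u) = \<gamma> * \<phi> b"
      using assms(1,3) by (simp add: if_distrib[of "\<lambda>x. x * _"] cong: if_cong)
    moreover have "(\<Sum>u\<in>V. mat_exp V (\<lambda>x y. \<i> * of_real (t j) * laplacian V adj x y) u a * \<phi> u)
        = exp (\<i> * of_real (t j * \<mu>)) * \<phi> a" for j
      using mat_exp_column_inner_eigenvector[OF assms(1,2) _ in_eigenspace_scale[OF eig, of "\<i> * of_real (t j)"]]
      by (simp add: laplacian_sym[OF sym] mult.assoc)
    ultimately show ?thesis by simp
  qed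
  then show ?thesis using that by blast
qed

lemma laplacian_pgst_if_eigenphases:
  assumes "finite J"
    and init: "\<And>x. x \<in> V \<Longrightarrow> (\<Sum>j\<in>J. \<phi> j x) = (if x = a then 1 else 0)"
    and eig: "\<And>j. j \<in> J \<Longrightarrow> in_eigenspace V (laplacian V adj) (of_real (\<mu> j)) (\<phi> j)"
    and lim: "\<And>j. j \<in> J \<Longrightarrow> (\<lambda>n. exp (\<i> * of_real (t n * \<mu> j))) \<longlonglongrightarrow> \<omega> j"
    and final: "\<And>x. x \<in> V \<Longrightarrow> (\<Sum>j\<in>J. \<omega> j * \<phi> j x) = (if x = b then \<gamma> else 0)"
  shows "laplacian_pgst V adj a b"
  unfolding laplacian_pgst_def
proof (intro exI ballI)
  fix u assume "u \<in> V"
  have "mat_exp V (\<lambda>x y. \<i> * of_real (t n) * laplacian V adj x y) u a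
      = (\<Sum>j\<in>J. exp (\<i> * of_real (t n * \<mu> j)) * \<phi> j u)" for n
    using mat_exp_eigen_expansion[OF \<open>finite J\<close> init in_eigenspace_scale[OF eig, of _ "\<i> * of_real (t n)"] \<open>u \<in> V\<close>]
    by (simp add: mult.assoc)
  moreover have "(\<lambda>n. \<Sum>j\<in>J. exp (\<i> * of_real (t n * \<mu> j)) * \<phi> j u) \<longlonglongrightarrow> (\<Sum>j\<in>J. \<omega> j * \<phi> j u)"
    by (intro tendsto_sum tendsto_mult_right lim)
  ultimately show "(\<lambda>n. mat_exp V (\<lambda>x y. \<i> * of_real (t n) * laplacian V adj x y) u a)
      \<longlonglongrightarrow> (if u = b then \<gamma> else 0)"
    using final[OF \<open>u \<in> V\<close>] by simp
qed

section \<open>The double cover\<close>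

lemma sum_blowup2_V: "finite V \<Longrightarrow> (\<Sum>w\<in>blowup2_V V. f w) = (\<Sum>x\<in>V. f (0, x) + f (1, x))"
  by (simp add: blowup2_V_def sum.cartesian_product' sum.distrib)

lemma blowup2_adj_sym: "(\<And>x y. adj x y \<longleftrightarrow> adj y x) \<Longrightarrow> blowup2_adj adj p q \<longleftrightarrow> blowup2_adj adj q p"
  by (simp add: blowup2_adj_def)

lemma degree_blowup2:
  assumes "finite V"
  shows "degree (blowup2_V V) (blowup2_adj adj) (b, x) = 2 * degree V adj x"
proof -
  have "{w \<in> blowup2_V V. blowup2_adj adj (b, x) w} = {0, 1::nat} \<times> {y \<in> V. adj x y}"
    by (auto simp: blowup2_V_def blowup2_adj_def)
  then show ?thesis
    using assms by (simp add: degree_def card_cartesian_product)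
qed

lemma in_eigenspace_blowup2_lift:
  assumes "finite V" and eig: "in_eigenspace V (laplacian V adj) \<mu> h"
  shows "in_eigenspace (blowup2_V V) (laplacian (blowup2_V V) (blowup2_adj adj)) (2 * \<mu>) (h \<circ> snd)"
  unfolding in_eigenspace_def
proof
  fix u assume "u \<in> blowup2_V V"
  then obtain b x where u: "u = (b, x)" "b \<in> {0, 1}" "x \<in> V"
    by (auto simp: blowup2_V_def)
  have "laplacian (blowup2_V V) (blowup2_adj adj) (b, x) (0, y) + laplacian (blowup2_V V) (blowup2_adj adj) (b, x) (1, y)
      = 2 * laplacian V adj x y" for y
    using u(2) by (auto simp: laplacian_def degree_blowup2[OF assms(1)] blowup2_adj_def)
  then have "mat_mult_vec (blowup2_V V) (laplacian (blowup2_V V) (blowup2_adj adj)) (h \<circ> snd) u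
      = 2 * mat_mult_vec V (laplacian V adj) h x"
    by (simp add: u(1) mat_mult_vec_def sum_blowup2_V[OF assms(1)] sum_distrib_left
        distrib_right[symmetric] mult.assoc)
  then show "mat_mult_vec (blowup2_V V) (laplacian (blowup2_V V) (blowup2_adj adj)) (h \<circ> snd) u
      = 2 * \<mu> * (h \<circ> snd) u"
    using eig u(1,3) by (simp add: in_eigenspace_def)
qed

lemma in_eigenspace_blowup2_vertex_diff:
  assumes "finite V" "v \<in> V"
  shows "in_eigenspace (blowup2_V V) (laplacian (blowup2_V V) (blowup2_adj adj))
           (2 * of_nat (degree V adj v)) (vertex_diff (0, v) (1, v))"
proof -
  have "finite (blowup2_V V)" "(0, v) \<in> blowup2_V V" "(1, v) \<in> blowup2_V V"
    using assms by (auto simp: blowup2_V_def)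
  then show ?thesis
    using in_eigenspace_laplacian_vertex_diff[of "blowup2_V V" "(0, v)" "(1, v)" "blowup2_adj adj"]
    by (simp add: blowup2_adj_def degree_blowup2[OF assms(1)])
qed

lemma blowup2_pgst_imp_phases:
  assumes "finite V" "v \<in> V" and sym: "\<And>x y. adj x y \<longleftrightarrow> adj y x"
    and "laplacian_pgst (blowup2_V V) (blowup2_adj adj) (0, v) (1, v)"
  obtains s :: "nat \<Rightarrow> real" where
    "(\<lambda>j. exp (\<i> * of_real (s j * degree V adj v))) \<longlonglongrightarrow> -1"
    "\<And>\<theta> h. in_eigenspace V (laplacian V adj) (of_real \<theta>) h \<Longrightarrow> h v \<noteq> 0 \<Longrightarrow>
       (\<lambda>j. exp (\<i> * of_real (s j * \<theta>))) \<longlonglongrightarrow> 1"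
proof -
  have fin: "finite (blowup2_V V)" and mem: "(0, v) \<in> blowup2_V V" "(1, v) \<in> blowup2_V V"
    using assms(1,2) by (auto simp: blowup2_V_def)
  obtain t \<gamma> where phase: "\<And>\<mu> \<phi>. in_eigenspace (blowup2_V V) (laplacian (blowup2_V V) (blowup2_adj adj)) (of_real \<mu>) \<phi> \<Longrightarrow>
      (\<lambda>j. exp (\<i> * of_real (t j * \<mu>)) * \<phi> (0, v)) \<longlonglongrightarrow> \<gamma> * \<phi> (1, v)"
    using laplacian_pgst_imp_eigenphases[OF fin mem blowup2_adj_sym[OF sym] assms(4)] by blast
  have "(\<lambda>j. 1) \<longlonglongrightarrow> \<gamma>"
    using phase[of 0 "\<lambda>_. 1"] in_eigenspace_laplacian_const[OF fin] by simp
  then have \<gamma>: "\<gamma> = 1"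
    using LIMSEQ_unique tendsto_const by blast
  show ?thesis
  proof
    have "(\<lambda>j. exp (\<i> * of_real (t j * (2 * real (degree V adj v)))) * vertex_diff (0::nat, v) (1, v) (0, v))
        \<longlonglongrightarrow> \<gamma> * vertex_diff (0::nat, v) (1, v) (1, v)"
      using in_eigenspace_blowup2_vertex_diff[OF assms(1,2), of adj]
      by (intro phase[where \<phi> = "vertex_diff (0::nat, v) (1, v)"]) simp
    then show "(\<lambda>j. exp (\<i> * of_real (2 * t j * degree V adj v))) \<longlonglongrightarrow> -1"
      using \<gamma> by (simp add: vertex_diff_def mult_ac)
  next
    fix \<theta> h assume eig: "in_eigenspace V (laplacian V adj) (of_real \<theta>) h" and "h v \<noteq> 0"
    have "(\<lambda>j. exp (\<i> * of_real (t j * (2 * \<theta>))) * (h \<circ> snd) (0::nat, v)) \<longlonglongrightarrow> \<gamma> * (h \<circ> snd) (1::nat, v)"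
      using in_eigenspace_blowup2_lift[OF assms(1) eig] by (intro phase[where \<phi> = "h \<circ> snd"]) simp
    then have "(\<lambda>j. exp (\<i> * of_real (2 * t j * \<theta>)) * h v) \<longlonglongrightarrow> h v"
      using \<gamma> by (simp add: mult_ac)
    then have "(\<lambda>j. exp (\<i> * of_real (2 * t j * \<theta>)) * h v / h v) \<longlonglongrightarrow> h v / h v"
      by (rule tendsto_divide) (use \<open>h v \<noteq> 0\<close> in auto)
    then show "(\<lambda>j. exp (\<i> * of_real (2 * t j * \<theta>))) \<longlonglongrightarrow> 1"
      using \<open>h v \<noteq> 0\<close> by simp
  qed
qed

lemma blowup2_pgst_if_phases:
  fixes \<theta> :: "'j \<Rightarrow> real"
  assumes "finite V" "v \<in> V" "finite J"
    and eig: "\<And>j. j \<in> J \<Longrightarrow> in_eigenspace V (laplacian V adj) (of_real (\<theta> j)) (h j)"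
    and expansion: "\<And>x. x \<in> V \<Longrightarrow> (\<Sum>j\<in>J. h j x) = (if x = v then 1 else 0)"
    and lim: "\<And>j. j \<in> J \<Longrightarrow> (\<lambda>n. exp (\<i> * of_real (s n * \<theta> j))) \<longlonglongrightarrow> 1"
    and lim_deg: "(\<lambda>n. exp (\<i> * of_real (s n * degree V adj v))) \<longlonglongrightarrow> -1"
  shows "laplacian_pgst (blowup2_V V) (blowup2_adj adj) (0, v) (1, v)"
proof -
  define \<phi> where "\<phi> j' w = (case j' of None \<Rightarrow> vertex_diff (0::nat, v) (1, v) w | Some j \<Rightarrow> h j (snd w)) / 2"
    for j' w
  define \<mu> where "\<mu> j' = (case j' of None \<Rightarrow> 2 * real (degree V adj v) | Some j \<Rightarrow> 2 * \<theta> j)" for j'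
  define \<omega> :: "'j option \<Rightarrow> complex" where "\<omega> j' = (case j' of None \<Rightarrow> -1 | Some j \<Rightarrow> 1)" for j'
  have sum_option: "(\<Sum>j'\<in>insert None (Some ` J). f j') = f None + (\<Sum>j\<in>J. f (Some j))" for f :: "'j option \<Rightarrow> complex"
    using \<open>finite J\<close> by (simp add: sum.reindex)
  show ?thesis
  proof (rule laplacian_pgst_if_eigenphases[where J = "insert None (Some ` J)" and \<phi> = \<phi> and \<mu> = \<mu>
        and t = "\<lambda>n. s n / 2" and \<omega> = \<omega> and \<gamma> = 1])
    fix j' assume "j' \<in> insert None (Some ` J)"
    then show "in_eigenspace (blowup2_V V) (laplacian (blowup2_V V) (blowup2_adj adj)) (of_real (\<mu> j')) (\<phi> j')"
      using in_eigenspace_blowup2_vertex_diff[OF assms(1,2)] in_eigenspace_blowup2_lift[OF assms(1) eig]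
      by (auto simp: \<phi>_def \<mu>_def in_eigenspace_def mat_mult_vec_def sum_divide_distrib[symmetric])
    show "(\<lambda>n. exp (\<i> * of_real (s n / 2 * \<mu> j'))) \<longlonglongrightarrow> \<omega> j'"
      using lim lim_deg \<open>j' \<in> insert None (Some ` J)\<close> by (auto simp: \<mu>_def \<omega>_def)
  next
    fix w assume "w \<in> blowup2_V V"
    then obtain b x where w: "w = (b, x)" "b \<in> {0, 1}" "x \<in> V"
      by (auto simp: blowup2_V_def)
    show "(\<Sum>j'\<in>insert None (Some ` J). \<phi> j' w) = (if w = (0, v) then 1 else 0)"
      using expansion[OF w(3)] w(2)
      by (auto simp: sum_option w(1) \<phi>_def vertex_diff_def sum_divide_distrib[symmetric])
    show "(\<Sum>j'\<in>insert None (Some ` J). \<omega> j' * \<phi> j' w) = (if w = (1, v) then 1 else 0)"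
      using expansion[OF w(3)] w(2)
      by (auto simp: sum_option w(1) \<phi>_def \<omega>_def vertex_diff_def sum_divide_distrib[symmetric])
  qed (use \<open>finite J\<close> in simp)
qed

section \<open>The cubic \<open>p\<close>\<close>

lemma irreducible_cubic_iff_no_root:
  fixes p :: "'a::field poly"
  assumes "Polynomial.degree p = 3"
  shows "irreducible p \<longleftrightarrow> (\<forall>x. poly p x \<noteq> 0)"
proof
  assume irr: "irreducible p"
  show "\<forall>x. poly p x \<noteq> 0"
  proof (intro allI notI)
    fix x assume "poly p x = 0"
    then obtain r where r: "p = [:-x, 1:] * r"
      by (auto simp: poly_eq_0_iff_dvd elim!: dvdE)
    have "r \<noteq> 0"
      using r assms by auto
    then have "Polynomial.degree r = 2"
      using r assms degree_mult_eq[of "[:-x, 1:]" r] by simp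
    then show False
      using irreducibleD[OF irr r] \<open>r \<noteq> 0\<close> by (auto simp: is_unit_iff_degree)
  qed
next
  assume no_root: "\<forall>x. poly p x \<noteq> 0"
  show "irreducible p"
  proof (rule irreducibleI)
    show "p \<noteq> 0" "\<not> is_unit p"
      using assms by (auto simp: is_unit_poly_iff)
    fix a b assume ab: "p = a * b"
    then have "a \<noteq> 0" "b \<noteq> 0"
      using assms by auto
    then have "Polynomial.degree a + Polynomial.degree b = 3"
      using ab assms by (simp add: degree_mult_eq)
    moreover have "Polynomial.degree c \<noteq> 1" if "c dvd p" for c
    proof
      assume "Polynomial.degree c = 1"
      then obtain u v where "c = [:v, u:]" "u \<noteq> 0"
        by (elim degree1_coeffs)
      then have "poly p (- v / u) = 0"
        using that by (auto elim!: dvdE)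
      then show False using no_root by blast
    qed
    then have "Polynomial.degree a \<noteq> 1" "Polynomial.degree b \<noteq> 1"
      using ab by auto
    ultimately have "Polynomial.degree a = 0 \<or> Polynomial.degree b = 0"
      by arith
    then show "is_unit a \<or> is_unit b"
      using \<open>a \<noteq> 0\<close> \<open>b \<noteq> 0\<close> by (auto simp: is_unit_iff_degree)
  qed
qed

lemma rat_root_of_monic_int_poly_is_int:
  fixes p :: "int poly" and q :: rat
  assumes monic: "lead_coeff p = 1" and root: "poly (map_poly of_int p) q = 0"
  shows "q \<in> \<int>"
proof -
  obtain a b where ab: "quotient_of q = (a, b)" by force
  then have "b > 0" "coprime a b" and q: "q = of_int a / of_int b"
    by (simp_all add: quotient_of_denom_pos quotient_of_coprime quotient_of_div)
  define n where "n = Polynomial.degree p"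
  define N where "N = (\<Sum>i\<le>n. coeff p i * a ^ i * b ^ (n - i))"
  have "of_int b ^ n * poly (map_poly of_int p) q = (\<Sum>i\<le>n. of_int (coeff p i) * (of_int b ^ n * q ^ i))"
    by (simp add: poly_altdef n_def degree_map_poly coeff_map_poly sum_distrib_left mult_ac)
  also have "\<dots> = of_int N"
    unfolding N_def of_int_sum
  proof (intro sum.cong refl)
    fix i assume "i \<in> {..n}"
    then have "of_int b ^ n = (of_int b ^ (n - i) * of_int b ^ i :: rat)"
      by (simp add: power_add[symmetric])
    then show "of_int (coeff p i) * (of_int b ^ n * q ^ i) = (of_int (coeff p i * a ^ i * b ^ (n - i)) :: rat)"
      using \<open>b > 0\<close> by (simp add: q power_divide)
  qed
  finally have "N = 0"
    using root by simp
  moreover have "N = a ^ n + (\<Sum>i<n. coeff p i * a ^ i * b ^ (n - i))"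
    using monic by (simp add: N_def n_def lessThan_Suc_atMost[symmetric])
  moreover have "b dvd (\<Sum>i<n. coeff p i * a ^ i * b ^ (n - i))"
  proof (intro dvd_sum)
    fix i assume "i \<in> {..<n}"
    then have "b dvd b ^ (n - i)"
      by (simp add: dvd_power)
    then show "b dvd coeff p i * a ^ i * b ^ (n - i)"
      by (rule dvd_mult)
  qed
  ultimately have "b dvd a ^ n"
    by (metis dvd_0_right dvd_add_left_iff)
  moreover have "coprime (a ^ n) b"
    using \<open>coprime a b\<close> by simp
  ultimately have "is_unit b"
    by (intro coprime_common_divisor[of "a ^ n" b b]) auto
  then show ?thesis
    using \<open>b > 0\<close> q by simp
qed

lemma eq_if_mult_eq_pred_mult_add:
  fixes r a b :: int
  assumes eq: "r * a * b = (r - 1) * (a + b)" and "a \<le> r - 2" "b \<le> r - 2"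
  shows "a = b"
proof (rule ccontr)
  assume "a \<noteq> b"
  have key: "a * b + (r - 1) * ((a - 1) * (b - 1)) = r - 1"
    using eq by (simp add: algebra_simps)
  consider "r \<le> 0" | "r = 1" | "r \<ge> 2" "a = 0 \<or> b = 0" | "r \<ge> 2" "a \<ge> 1" "b \<ge> 1"
    | "r \<ge> 2" "a \<ge> 1" "b \<le> -1" | "r \<ge> 2" "a \<le> -1" "b \<ge> 1" | "r \<ge> 2" "a \<le> -1" "b \<le> -1"
    by linarith
  then show False
  proof cases
    case 1
    then have "r * (a * b) \<le> 0" "(r - 1) * (a + b) > 0"
      using assms(2,3) by (simp_all add: mult_nonpos_nonneg mult_neg_neg zero_le_mult_iff)
    then show False using eq by (simp add: mult.assoc)
  next
    case 2
    then show False using eq assms(2,3) by simp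
  next
    case 3
    then show False using key \<open>a \<noteq> b\<close> by auto
  next
    case 4
    have "1 * 1 \<le> a * b"
      using 4 by (intro mult_mono) auto
    moreover have "(r - 1) * 1 \<le> (r - 1) * ((a - 1) * (b - 1))" if "(a - 1) * (b - 1) \<ge> 1"
      using 4 that by (intro mult_left_mono) auto
    ultimately have "(a - 1) * (b - 1) = 0"
      using key 4 by (smt (verit) zero_le_mult_iff)
    then show False using key 4 assms(2,3) by auto
  next
    case 5
    then have "a * b < 0" "(r - 1) * ((a - 1) * (b - 1)) \<le> 0"
      by (simp_all add: mult_pos_neg mult_nonneg_nonpos)
    then show False using key 5 by linarith
  next
    case 6
    then have "a * b < 0" "(r - 1) * ((a - 1) * (b - 1)) \<le> 0"
      by (simp_all add: mult_neg_pos mult_nonneg_nonpos mult_nonpos_nonneg)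
    then show False using key 6 by linarith
  next
    case 7
    have "1 * 1 \<le> (- a) * (- b)" "2 * 2 \<le> (1 - a) * (1 - b)"
      using 7 by (intro mult_mono; simp)+
    then have "(r - 1) * 4 \<le> (r - 1) * ((a - 1) * (b - 1))"
      using 7 by (intro mult_left_mono) (auto simp: algebra_simps)
    then show False using key 7 \<open>1 * 1 \<le> (- a) * (- b)\<close> by (simp add: algebra_simps)
  qed
qed

definition dstar_cubic :: "nat \<Rightarrow> nat \<Rightarrow> 'a::comm_ring_1 \<Rightarrow> 'a" where
  "dstar_cubic k l x = x * (x - of_nat k - 1) * (x - of_nat l - 1) - (x - 1) * (x - of_nat k - 1) - (x - 1) * (x - of_nat l - 1)"

lemma dstar_cubic_expand:
  "dstar_cubic k l x = x ^ 3 - of_nat (k + l + 4) * x ^ 2 + of_nat (k * l + 2 * k + 2 * l + 5) * x - of_nat (k + l + 2)"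
  by (simp add: dstar_cubic_def algebra_simps power2_eq_square power3_eq_cube)

lemma poly_dstar_p: "poly (dstar_p k l) x = dstar_cubic k l x"
  by (simp add: dstar_p_def dstar_cubic_def algebra_simps)

lemma dstar_p_eq_map_poly:
  "dstar_p k l = map_poly of_int [:- int (k + l + 2), int (k * l + 2 * k + 2 * l + 5), - int (k + l + 4), 1:]"
  by (rule poly_eq_poly_eq_iff[THEN iffD1])
    (simp add: fun_eq_iff poly_dstar_p dstar_cubic_expand map_poly_pCons algebra_simps power2_eq_square power3_eq_cube)

lemma degree_dstar_p: "Polynomial.degree (dstar_p k l) = 3"
  by (simp add: dstar_p_eq_map_poly map_poly_pCons)

lemma of_rat_dstar_cubic: "of_rat (dstar_cubic k l q) = dstar_cubic k l (of_rat q :: 'a::field_char_0)"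
  by (simp add: dstar_cubic_def of_rat_diff of_rat_mult)

lemma dstar_cubic_int_root_imp_eq:
  assumes "k \<ge> 1" "l \<ge> 1" and root: "dstar_cubic k l (of_int r :: rat) = 0"
  shows "k = l"
proof -
  have "of_int (r * (r - int k - 1) * (r - int l - 1) - (r - 1) * ((r - int k - 1) + (r - int l - 1)))
      = dstar_cubic k l (of_int r :: rat)"
    by (simp add: dstar_cubic_def algebra_simps)
  then have "r * (r - int k - 1) * (r - int l - 1) - (r - 1) * ((r - int k - 1) + (r - int l - 1)) = 0"
    using root by (simp only: of_int_eq_0_iff)
  then have "r * (r - int k - 1) * (r - int l - 1) = (r - 1) * ((r - int k - 1) + (r - int l - 1))"
    by simp
  then have "r - int k - 1 = r - int l - 1"
    by (rule eq_if_mult_eq_pred_mult_add) (use assms(1,2) in auto)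
  then show ?thesis by simp
qed

lemma irreducible_dstar_p_iff:
  assumes "k \<ge> 1" "l \<ge> 1"
  shows "irreducible (dstar_p k l) \<longleftrightarrow> k \<noteq> l"
proof -
  have "(\<exists>q. dstar_cubic k l (q::rat) = 0) \<longleftrightarrow> k = l"
  proof
    assume "\<exists>q. dstar_cubic k l (q::rat) = 0"
    then obtain q :: rat where q: "dstar_cubic k l q = 0" by blast
    then have "poly (map_poly of_int [:- int (k + l + 2), int (k * l + 2 * k + 2 * l + 5), - int (k + l + 4), 1:]) q = 0"
      by (simp only: poly_dstar_p dstar_p_eq_map_poly[symmetric])
    then have "q \<in> \<int>"
      by (rule rat_root_of_monic_int_poly_is_int[rotated]) simp
    then show "k = l"
      using q dstar_cubic_int_root_imp_eq[OF assms] by (auto elim: Ints_cases)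
  next
    assume "k = l"
    then show "\<exists>q. dstar_cubic k l (q::rat) = 0"
      by (intro exI[of _ "of_nat k + 1"]) (simp add: dstar_cubic_def)
  qed
  then show ?thesis
    by (auto simp: irreducible_cubic_iff_no_root degree_dstar_p poly_dstar_p)
qed

lemma cubic_vieta:
  fixes a b c S P R :: "'a::idom"
  assumes "a \<noteq> b" "a \<noteq> c" "b \<noteq> c"
    and roots: "\<And>x. x \<in> {a, b, c} \<Longrightarrow> x ^ 3 - S * x ^ 2 + P * x - R = 0"
  shows "a + b + c = S" "a * b + a * c + b * c = P" "a * b * c = R"
proof -
  have diff: "(x ^ 3 - S * x ^ 2 + P * x - R) - (y ^ 3 - S * y ^ 2 + P * y - R)
      = (x - y) * (x ^ 2 + x * y + y ^ 2 - S * (x + y) + P)" for x y :: 'a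
    by (simp add: algebra_simps power2_eq_square power3_eq_cube)
  have ab: "a ^ 2 + a * b + b ^ 2 - S * (a + b) + P = 0" and ac: "a ^ 2 + a * c + c ^ 2 - S * (a + c) + P = 0"
    using diff[of a b] diff[of a c] roots assms(1,2) by auto
  have "(b - c) * (a + b + c - S) = 0"
    using arg_cong2[OF ab ac, of "(-)"] by (simp add: algebra_simps power2_eq_square)
  then show S: "a + b + c = S"
    using assms(3) by simp
  then show P: "a * b + a * c + b * c = P"
    using ab by (simp add: algebra_simps power2_eq_square flip: S)
  have "a * (a ^ 2 - S * a + P) = R"
    using roots[of a] by (simp add: algebra_simps power2_eq_square power3_eq_cube)
  then show "a * b * c = R"
    by (simp add: algebra_simps power2_eq_square flip: S P)
qed

lemma dstar_cubic_real_roots: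
  assumes "k \<ge> 1" "l \<ge> 1"
  obtains a b c :: real where "a < b" "b < c" "dstar_cubic k l a = 0" "dstar_cubic k l b = 0" "dstar_cubic k l c = 0"
proof -
  have cont: "isCont (dstar_cubic k l :: real \<Rightarrow> real) x" for x
    unfolding dstar_cubic_def by (intro continuous_intros)
  obtain m :: real where m: "1 < m" "m < real (k + l + 4)" "dstar_cubic k l m < 0"
  proof (cases "k = l")
    case True
    then show ?thesis
      using that[of "real k + 2"] assms by (simp add: dstar_cubic_def algebra_simps)
  next
    case False
    then show ?thesis
      using that[of "real (max k l) + 1"] assms
      by (cases "k < l") (auto simp: dstar_cubic_def max_def algebra_simps mult_pos_neg mult_neg_pos)
  qed
  have "dstar_cubic k l (real (k + l + 4))
      = real (18 + 12 * k + 12 * l + 2 * k ^ 2 + 2 * l ^ 2 + 8 * k * l + k ^ 2 * l + k * l ^ 2)"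
    by (simp add: dstar_cubic_expand algebra_simps power2_eq_square power3_eq_cube)
  then have fN: "dstar_cubic k l (real (k + l + 4)) > 0"
    by (simp only: of_nat_0_less_iff)
  have f0: "dstar_cubic k l (0::real) < 0" and f1: "dstar_cubic k l (1::real) > 0"
    using assms by (simp_all add: dstar_cubic_def)
  have "\<exists>a\<ge>0. a \<le> 1 \<and> dstar_cubic k l a = (0::real)"
    using f0 f1 cont by (intro IVT) auto
  moreover have "\<exists>b\<ge>1. b \<le> m \<and> dstar_cubic k l b = (0::real)"
    using f1 m cont by (intro IVT2) auto
  moreover have "\<exists>c\<ge>m. c \<le> real (k + l + 4) \<and> dstar_cubic k l c = (0::real)"
    using fN m cont by (intro IVT) auto
  ultimately obtain a b c :: real where "0 \<le> a" "a \<le> 1" "dstar_cubic k l a = 0"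
    "1 \<le> b" "b \<le> m" "dstar_cubic k l b = 0" "m \<le> c" "dstar_cubic k l c = 0"
    by blast
  moreover have "a \<noteq> 1" "b \<noteq> 1" "b \<noteq> m" "c \<noteq> m"
    using calculation f1 m(3) by auto
  ultimately show ?thesis
    using that[of a b c] by simp
qed

lemma dstar_cubic_roots:
  assumes "k \<ge> 1" "l \<ge> 1"
  obtains a b c :: real where "a < b" "b < c" "\<And>x. dstar_cubic k l x = 0 \<longleftrightarrow> x = a \<or> x = b \<or> x = c"
    "a + b + c = real (k + l + 4)" "a * b + a * c + b * c = real (k * l + 2 * k + 2 * l + 5)"
    "a * b * c = real (k + l + 2)"
proof -
  obtain a b c :: real where abc: "a < b" "b < c" "dstar_cubic k l a = 0" "dstar_cubic k l b = 0" "dstar_cubic k l c = 0"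
    by (rule dstar_cubic_real_roots[OF assms])
  have vieta: "a + b + c = real (k + l + 4)" "a * b + a * c + b * c = real (k * l + 2 * k + 2 * l + 5)"
    "a * b * c = real (k + l + 2)"
    using abc by (intro cubic_vieta; force simp: dstar_cubic_expand)+
  have "dstar_cubic k l x = (x - a) * (x - b) * (x - c)" for x
    unfolding dstar_cubic_expand vieta[symmetric] by (simp add: algebra_simps power2_eq_square power3_eq_cube)
  then show ?thesis
    using that abc(1,2) vieta by simp
qed

section \<open>Rational relations between the roots of a cubic\<close>

text \<open>The hypotheses on \<open>a\<close>, \<open>b\<close>, \<open>c\<close> below say that they are the roots of a rational cubic \<open>f\<close>
  without rational roots.\<close>

lemma irrat_no_rat_linear_relation:
  fixes x B C :: real
  assumes "x \<notin> \<rat>" "B \<in> \<rat>" "C \<in> \<rat>" "B * x + C = 0"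
  shows "B = 0 \<and> C = 0"
proof (cases "B = 0")
  case False
  then have "x = - C / B"
    using assms(4) by (simp add: field_simps add_eq_0_iff2)
  then show ?thesis
    using assms(1-3) by simp
qed (use assms(4) in simp)

lemma cubic_root_no_rat_quadratic_relation:
  fixes a b c A B C :: real
  assumes sym: "a + b + c \<in> \<rat>" "a * b + a * c + b * c \<in> \<rat>" "a * b * c \<in> \<rat>"
    and irrat: "a \<notin> \<rat>" "b \<notin> \<rat>" "c \<notin> \<rat>"
    and coeffs: "A \<in> \<rat>" "B \<in> \<rat>" "C \<in> \<rat>" and rel: "A * a ^ 2 + B * a + C = 0"
  shows "A = 0 \<and> B = 0 \<and> C = 0"
proof (cases "A = 0")
  case True
  then have "B * a + C = 0"
    using rel by simp
  then show ?thesis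
    using True irrat_no_rat_linear_relation[OF irrat(1) coeffs(2,3)] by simp
next
  case False
  define S P R where "S = a + b + c" and "P = a * b + a * c + b * c" and "R = a * b * c"
  define u v where "u = - B / A" and "v = - C / A"
  have uv: "u \<in> \<rat>" "v \<in> \<rat>"
    using coeffs by (simp_all add: u_def v_def)
  have sq: "a ^ 2 = u * a + v"
    using rel False by (simp add: u_def v_def field_simps)
  define c1 c0 where "c1 = u ^ 2 + v - S * u + P" and "c0 = u * v - S * v - R"
  have c10: "c1 \<in> \<rat>" "c0 \<in> \<rat>"
    using uv sym by (simp_all add: c1_def c0_def S_def P_def R_def)
  have division: "(x - a) * (x - b) * (x - c) = (x ^ 2 - u * x - v) * (x - (S - u)) + c1 * x + c0" for x
    by (simp add: c1_def c0_def S_def P_def R_def algebra_simps power2_eq_square)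
  have "c1 * a + c0 = 0"
    using division[of a] sq by simp
  then have "c1 = 0" "c0 = 0"
    using irrat_no_rat_linear_relation[OF irrat(1) c10] by simp_all
  then have "(S - u - a) * (S - u - b) * (S - u - c) = 0"
    using division[of "S - u"] by simp
  moreover have "S - u \<in> \<rat>"
    using sym uv by (simp add: S_def)
  ultimately show ?thesis
    using irrat by auto
qed

lemma sum_squares_minus_three_sym_pos:
  fixes a b c :: real
  assumes "a \<noteq> b"
  shows "(a + b + c) ^ 2 - 3 * (a * b + a * c + b * c) > 0"
proof -
  have "(a + b + c) ^ 2 - 3 * (a * b + a * c + b * c) = ((a - b) ^ 2 + (a - c) ^ 2 + (b - c) ^ 2) / 2"
    by (simp add: algebra_simps power2_eq_square)
  also have "\<dots> > 0"
    using assms by (intro divide_pos_pos add_pos_nonneg) auto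
  finally show ?thesis .
qed

lemma cubic_roots_no_rat_affine_relation:
  fixes a b c m b\<^sub>0 :: real
  assumes sym: "a + b + c \<in> \<rat>" "a * b + a * c + b * c \<in> \<rat>" "a * b * c \<in> \<rat>"
    and irrat: "a \<notin> \<rat>" "b \<notin> \<rat>" "c \<notin> \<rat>" and "a \<noteq> b"
    and "m \<in> \<rat>" "b\<^sub>0 \<in> \<rat>" "m \<noteq> 0" and b: "b = m * a + b\<^sub>0"
  shows False
proof -
  define S P R where "S = a + b + c" and "P = a * b + a * c + b * c" and "R = a * b * c"
  txt \<open>Both \<open>a\<close> and \<open>m a + b\<^sub>0\<close> are roots of \<open>f\<close>, so \<open>f (m x + b\<^sub>0) - m\<^sup>3 f x\<close> is a rational
    quadratic vanishing at \<open>a\<close>.\<close>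
  define A B C where "A = 3 * m ^ 2 * b\<^sub>0 - S * m ^ 2 + S * m ^ 3"
    and "B = 3 * m * b\<^sub>0 ^ 2 - 2 * S * m * b\<^sub>0 + P * m - P * m ^ 3"
    and "C = b\<^sub>0 ^ 3 - S * b\<^sub>0 ^ 2 + P * b\<^sub>0 - R + R * m ^ 3"
  have f: "(x - a) * (x - b) * (x - c) = x ^ 3 - S * x ^ 2 + P * x - R" for x
    by (simp add: S_def P_def R_def algebra_simps power2_eq_square power3_eq_cube)
  have "A * a ^ 2 + B * a + C = (b ^ 3 - S * b ^ 2 + P * b - R) - m ^ 3 * (a ^ 3 - S * a ^ 2 + P * a - R)"
    unfolding A_def B_def C_def b by (simp add: algebra_simps power2_eq_square power3_eq_cube)
  then have "A * a ^ 2 + B * a + C = 0"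
    using f[of a] f[of b] by simp
  moreover have "S \<in> \<rat>" "P \<in> \<rat>" "R \<in> \<rat>"
    using sym by (simp_all add: S_def P_def R_def)
  then have "A \<in> \<rat>" "B \<in> \<rat>" "C \<in> \<rat>"
    using assms(8,9) by (simp_all add: A_def B_def C_def)
  ultimately have "A = 0" "B = 0"
    using cubic_root_no_rat_quadratic_relation[OF sym irrat] by auto
  moreover have "A = m ^ 2 * (3 * b\<^sub>0 - S * (1 - m))" "B = m * (3 * b\<^sub>0 ^ 2 - 2 * S * b\<^sub>0 + P * (1 - m ^ 2))"
    by (simp_all add: A_def B_def algebra_simps power2_eq_square power3_eq_cube)
  ultimately have e1: "3 * b\<^sub>0 = S * (1 - m)" and e2: "3 * b\<^sub>0 ^ 2 - 2 * S * b\<^sub>0 + P * (1 - m ^ 2) = 0"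
    using \<open>m \<noteq> 0\<close> by simp_all
  have "9 * (3 * b\<^sub>0 ^ 2 - 2 * S * b\<^sub>0 + P * (1 - m ^ 2)) = 3 * (3 * b\<^sub>0) ^ 2 - 6 * S * (3 * b\<^sub>0) + 9 * P * (1 - m ^ 2)"
    by (simp add: algebra_simps power2_eq_square)
  also have "\<dots> = 3 * (1 - m) * (1 + m) * (3 * P - S ^ 2)"
    unfolding e1 by (simp add: algebra_simps power2_eq_square)
  finally have "(1 - m) * (1 + m) * (3 * P - S ^ 2) = 0"
    using e2 by simp
  moreover have "S ^ 2 - 3 * P > 0"
    using sum_squares_minus_three_sym_pos[OF \<open>a \<noteq> b\<close>] by (simp add: S_def P_def)
  ultimately have "m = 1 \<or> m = -1"
    by auto
  then show False
  proof
    assume "m = 1"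
    then show False using b e1 \<open>a \<noteq> b\<close> by simp
  next
    assume "m = -1"
    then have "c = S / 3"
      using b e1 unfolding S_def by (simp add: algebra_simps)
    with \<open>S \<in> \<rat>\<close> have "c \<in> \<rat>"
      by (simp only: Rats_divide Rats_number_of)
    with irrat(3) show False ..
  qed
qed

lemma cubic_roots_no_rat_linear_relation:
  fixes a b c \<alpha> \<beta> \<gamma> :: real
  assumes sym: "a + b + c \<in> \<rat>" "a * b + a * c + b * c \<in> \<rat>" "a * b * c \<in> \<rat>"
    and irrat: "a \<notin> \<rat>" "b \<notin> \<rat>" "c \<notin> \<rat>" and "a \<noteq> b"
    and coeffs: "\<alpha> \<in> \<rat>" "\<beta> \<in> \<rat>" "\<gamma> \<in> \<rat>" and rel: "\<alpha> * a + \<beta> * b = \<gamma>"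
  shows "\<alpha> = 0 \<and> \<beta> = 0"
proof (rule ccontr)
  assume nontrivial: "\<not> (\<alpha> = 0 \<and> \<beta> = 0)"
  have "\<beta> \<noteq> 0"
    using nontrivial rel irrat_no_rat_linear_relation[OF irrat(1) coeffs(1), of "- \<gamma>"] coeffs(3) by auto
  moreover have "\<alpha> \<noteq> 0"
    using nontrivial rel irrat_no_rat_linear_relation[OF irrat(2) coeffs(2), of "- \<gamma>"] coeffs(3) by auto
  moreover have "b = (- \<alpha> / \<beta>) * a + \<gamma> / \<beta>"
    using rel \<open>\<beta> \<noteq> 0\<close> by (simp add: field_simps)
  ultimately show False
    using cubic_roots_no_rat_affine_relation[OF sym irrat \<open>a \<noteq> b\<close>, of "- \<alpha> / \<beta>" "\<gamma> / \<beta>"] coeffs by simp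
qed

lemma cubic_roots_int_independent:
  fixes a b c :: real
  assumes sym: "a + b + c \<in> \<rat>" "a * b + a * c + b * c \<in> \<rat>" "a * b * c \<in> \<rat>"
    and irrat: "a \<notin> \<rat>" "b \<notin> \<rat>" "c \<notin> \<rat>" and "a \<noteq> b"
    and "a + b + c \<noteq> 0" and rel: "of_int u\<^sub>1 * a + of_int u\<^sub>2 * b + of_int u\<^sub>3 * c = 0"
  shows "u\<^sub>1 = 0 \<and> u\<^sub>2 = 0 \<and> u\<^sub>3 = 0"
proof -
  have "of_int (u\<^sub>1 - u\<^sub>3) * a + of_int (u\<^sub>2 - u\<^sub>3) * b = - of_int u\<^sub>3 * (a + b + c)"
    using rel by (simp add: algebra_simps)
  then have "of_int (u\<^sub>1 - u\<^sub>3) = (0::real) \<and> of_int (u\<^sub>2 - u\<^sub>3) = (0::real)"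
    by (intro cubic_roots_no_rat_linear_relation[OF sym irrat \<open>a \<noteq> b\<close>]) (use sym(1) in simp_all)
  moreover from this have "of_int u\<^sub>3 * (a + b + c) = 0"
    using rel by (simp add: algebra_simps)
  ultimately show ?thesis
    using \<open>a + b + c \<noteq> 0\<close> by simp
qed

lemma sqrt_2_irrational: "sqrt 2 \<notin> \<rat>"
proof
  assume "sqrt 2 \<in> \<rat>"
  then obtain q :: rat where q: "sqrt 2 = of_rat q"
    by (auto elim: Rats_cases)
  then have "of_rat (q ^ 2) = (of_rat 2 :: real)"
    by (metis of_rat_numeral_eq of_rat_power real_sqrt_pow2 zero_le_numeral)
  then have "poly (map_poly of_int [:-2, 0, 1:]) q = 0"
    unfolding of_rat_eq_iff by (simp add: map_poly_pCons power2_eq_square)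
  then have "q \<in> \<int>"
    by (rule rat_root_of_monic_int_poly_is_int[rotated]) simp
  then obtain m :: int where "q = of_int m"
    by (auto elim: Ints_cases)
  with \<open>of_rat (q ^ 2) = of_rat 2\<close> have "m ^ 2 = 2"
    by (metis of_int_eq_iff of_int_numeral of_int_power of_rat_of_int_eq)
  then have "even (m ^ 2)"
    by simp
  then obtain j where "m = 2 * j"
    by auto
  with \<open>m ^ 2 = 2\<close> have "2 * j ^ 2 = 1"
    by (simp add: power2_eq_square)
  then show False
    by (metis dvd_triv_left odd_one)
qed

section \<open>Simultaneous phases\<close>

lemma exp_i_mult_add:
  "exp (\<i> * of_real (s * (x + y))) = exp (\<i> * of_real (s * x)) * exp (\<i> * of_real (s * y))"
  by (simp add: distrib_left exp_add)

lemma exp_i_mult_of_nat: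
  "exp (\<i> * of_real (s * (of_nat n * x))) = exp (\<i> * of_real (s * x)) ^ n"
  by (simp add: exp_of_nat_mult[symmetric] mult_ac)

lemma exp_i_two_pi_int: "exp (\<i> * of_real (2 * pi * of_int h)) = 1"
  using exp_2pi_1_int[of h] by (simp add: mult_ac)

lemma int_independent_imp_module_independent:
  fixes \<theta> :: "nat \<Rightarrow> real"
  assumes indep: "\<And>u :: nat \<Rightarrow> int. (\<Sum>i<n. of_int (u i) * \<theta> i) = 0 \<Longrightarrow> \<forall>i<n. u i = 0"
  shows "inj_on \<theta> {..<n}" "module.independent (\<lambda>r. (*) (real_of_int r)) (\<theta> ` {..<n})"
proof -
  show inj: "inj_on \<theta> {..<n}"
  proof (rule inj_onI, rule ccontr)
    fix i j assume ij: "i \<in> {..<n}" "j \<in> {..<n}" "\<theta> i = \<theta> j" "i \<noteq> j"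
    define u :: "nat \<Rightarrow> int" where "u x = (if x = i then 1 else if x = j then -1 else 0)" for x
    have "(\<Sum>x<n. of_int (u x) * \<theta> x) = \<theta> i - \<theta> j"
      using ij by (simp add: u_def if_distrib[of "\<lambda>z. of_int z * _"] sum.If_cases Int_absorb1)
    then show False
      using indep[of u] ij by (auto simp: u_def)
  qed
  interpret M: Modules.module "\<lambda>r. (*) (real_of_int r)"
    by unfold_locales (simp_all add: algebra_simps)
  show "M.independent (\<theta> ` {..<n})"
    unfolding M.independent_explicit_module
  proof (intro allI impI)
    fix t and u :: "real \<Rightarrow> int" and v
    assume t: "finite t" "t \<subseteq> \<theta> ` {..<n}" and sum0: "(\<Sum>v\<in>t. real_of_int (u v) * v) = 0" and "v \<in> t"
    define U where "U i = (if \<theta> i \<in> t then u (\<theta> i) else 0)" for i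
    have inj_t: "inj_on \<theta> {i \<in> {..<n}. \<theta> i \<in> t}"
      by (rule inj_on_subset[OF inj]) auto
    have "(\<Sum>i<n. of_int (U i) * \<theta> i) = (\<Sum>i<n. if \<theta> i \<in> t then of_int (u (\<theta> i)) * \<theta> i else 0)"
      by (intro sum.cong) (simp_all add: U_def)
    also have "\<dots> = (\<Sum>i\<in>{i \<in> {..<n}. \<theta> i \<in> t}. of_int (u (\<theta> i)) * \<theta> i)"
      by (rule sum.inter_filter[symmetric]) simp
    also have "\<dots> = (\<Sum>v\<in>\<theta> ` {i \<in> {..<n}. \<theta> i \<in> t}. real_of_int (u v) * v)"
      by (subst sum.reindex[OF inj_t]) (simp add: comp_def)
    also have "\<theta> ` {i \<in> {..<n}. \<theta> i \<in> t} = t"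
      using t(2) by blast
    finally have "(\<Sum>i<n. of_int (U i) * \<theta> i) = (\<Sum>v\<in>t. real_of_int (u v) * v)" .
    then have "\<forall>i<n. U i = 0"
      using sum0 indep by simp
    moreover obtain i where "i < n" "v = \<theta> i"
      using \<open>v \<in> t\<close> t(2) by blast
    ultimately show "u v = 0"
      using \<open>v \<in> t\<close> by (auto simp: U_def)
  qed
qed

lemma Kronecker_exp_tendsto:
  fixes \<theta> \<beta> :: "nat \<Rightarrow> real"
  assumes indep: "\<And>u :: nat \<Rightarrow> int. (\<Sum>i<n. of_int (u i) * \<theta> i) = 0 \<Longrightarrow> \<forall>i<n. u i = 0"
  obtains s :: "nat \<Rightarrow> real" where
    "\<And>i. i < n \<Longrightarrow> (\<lambda>m. exp (\<i> * of_real (s m * \<theta> i))) \<longlonglongrightarrow> exp (\<i> * of_real (\<beta> i))"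
proof -
  define \<alpha> where "\<alpha> i = \<beta> i / (2 * pi)" for i
  have "\<exists>p :: real \<times> (nat \<Rightarrow> int). \<forall>i<n. \<bar>fst p * \<theta> i - of_int (snd p i) - \<alpha> i\<bar> < 1 / real (Suc m)" for m
  proof -
    obtain t h where "\<And>i. i < n \<Longrightarrow> \<bar>t * \<theta> i - of_int (h i) - \<alpha> i\<bar> < 1 / real (Suc m)"
      using Kronecker_thm_1[OF int_independent_imp_module_independent(2,1)[OF indep], where \<epsilon> = "1 / real (Suc m)" and \<alpha> = \<alpha>]
      by auto
    then show ?thesis
      by (intro exI[of _ "(t, h)"]) simp
  qed
  then obtain p where p: "\<And>m i. i < n \<Longrightarrow> \<bar>fst (p m) * \<theta> i - of_int (snd (p m) i) - \<alpha> i\<bar> < 1 / real (Suc m)"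
    by metis
  define \<delta> where "\<delta> i m = fst (p m) * \<theta> i - of_int (snd (p m) i) - \<alpha> i" for i m
  show ?thesis
  proof (rule that[of "\<lambda>m. 2 * pi * fst (p m)"])
    fix i assume "i < n"
    have "\<delta> i \<longlonglongrightarrow> 0"
    proof (rule Lim_null_comparison)
      show "\<forall>\<^sub>F m in sequentially. norm (\<delta> i m) \<le> 1 / real (Suc m)"
        using p[OF \<open>i < n\<close>] by (intro always_eventually) (simp add: \<delta>_def less_imp_le)
      show "(\<lambda>m. 1 / real (Suc m)) \<longlonglongrightarrow> 0"
        by (rule LIMSEQ_Suc[OF lim_inverse_n'])
    qed
    then have "(\<lambda>m. exp (\<i> * of_real (\<beta> i)) * exp (\<i> * of_real (2 * pi * \<delta> i m)))
        \<longlonglongrightarrow> exp (\<i> * of_real (\<beta> i)) * exp (\<i> * of_real (2 * pi * 0))"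
      by (intro tendsto_intros)
    moreover have "2 * pi * fst (p m) * \<theta> i = 2 * pi * of_int (snd (p m) i) + (\<beta> i + 2 * pi * \<delta> i m)" for m
      by (simp add: \<delta>_def \<alpha>_def algebra_simps)
    then have "exp (\<i> * of_real (2 * pi * fst (p m) * \<theta> i)) = exp (\<i> * of_real (2 * pi * of_int (snd (p m) i)))
        * (exp (\<i> * of_real (\<beta> i)) * exp (\<i> * of_real (2 * pi * \<delta> i m)))" for m
      by (simp only: of_real_add distrib_left exp_add)
    then have "exp (\<i> * of_real (2 * pi * fst (p m) * \<theta> i))
        = exp (\<i> * of_real (\<beta> i)) * exp (\<i> * of_real (2 * pi * \<delta> i m))" for m
      by (simp only: exp_i_two_pi_int mult_1)
    ultimately show "(\<lambda>m. exp (\<i> * of_real (2 * pi * fst (p m) * \<theta> i))) \<longlonglongrightarrow> exp (\<i> * of_real (\<beta> i))"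
      by simp
  qed
qed

lemma multiplicity_two_neq_imp_odd_multiple:
  fixes d e :: nat
  assumes "d > 0" "e > 0" "multiplicity 2 d \<noteq> multiplicity 2 e"
  obtains x y :: nat where "odd y" "x * (d + e) = y * d"
proof -
  obtain d' where d: "d = 2 ^ multiplicity 2 d * d'" "odd d'"
    by (rule multiplicity_decompose'[of d 2]) (use assms(1) in auto)
  obtain e' where e: "e = 2 ^ multiplicity 2 e * e'" "odd e'"
    by (rule multiplicity_decompose'[of e 2]) (use assms(2) in auto)
  define \<alpha> \<beta> where "\<alpha> = multiplicity 2 d" and "\<beta> = multiplicity 2 e"
  consider "\<alpha> < \<beta>" | "\<beta> < \<alpha>"
    using assms(3) by (simp add: \<alpha>_def \<beta>_def) linarith
  then show ?thesis
  proof cases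
    case 1
    then have "e = 2 ^ \<alpha> * (2 ^ (\<beta> - \<alpha>) * e')"
      using e(1) by (simp add: \<beta>_def[symmetric] mult.assoc power_add[symmetric])
    then have "d' * (d + e) = (d' + 2 ^ (\<beta> - \<alpha>) * e') * d"
      using d(1) by (simp add: \<alpha>_def[symmetric] algebra_simps)
    moreover have "odd (d' + 2 ^ (\<beta> - \<alpha>) * e')"
      using d(2) 1 by simp
    ultimately show ?thesis
      by (rule that[rotated])
  next
    case 2
    then have "d = 2 ^ \<beta> * (2 ^ (\<alpha> - \<beta>) * d')"
      using d(1) by (simp add: \<alpha>_def[symmetric] mult.assoc power_add[symmetric])
    then have "(2 ^ (\<alpha> - \<beta>) * d') * (d + e) = (2 ^ (\<alpha> - \<beta>) * d' + e') * d"
      using e(1) by (simp add: \<beta>_def[symmetric] algebra_simps)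
    moreover have "odd (2 ^ (\<alpha> - \<beta>) * d' + e')"
      using e(2) 2 by simp
    ultimately show ?thesis
      by (rule that[rotated])
  qed
qed

lemma multiplicity_two_eq_imp_half_odd_multiple:
  fixes d e :: nat
  assumes "d > 0" "e > 0" "multiplicity 2 d = multiplicity 2 e"
  obtains j z :: int where "2 * int d * j = int (d + e) * (2 * z + 1)"
proof -
  define \<alpha> where "\<alpha> = multiplicity 2 d"
  obtain d' where d: "d = 2 ^ \<alpha> * d'" "odd d'"
    unfolding \<alpha>_def by (rule multiplicity_decompose'[of d 2]) (use assms(1) in auto)
  obtain e' where e: "e = 2 ^ \<alpha> * e'" "odd e'"
    unfolding \<alpha>_def assms(3) by (rule multiplicity_decompose'[of e 2]) (use assms(2) in auto)
  obtain j where j: "d' + e' = 2 * j"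
    using d(2) e(2) by (metis evenE odd_add)
  obtain z where z: "d' = 2 * z + 1"
    using d(2) oddE by blast
  have "2 * d * j = 2 ^ \<alpha> * (d' + e') * d'"
    by (simp add: d(1) j algebra_simps)
  also have "\<dots> = (d + e) * d'"
    by (simp add: d(1) e(1) algebra_simps)
  also have "\<dots> = (d + e) * (2 * z + 1)"
    by (simp only: z)
  finally show ?thesis
    using that[of "int j" "int z"] by (metis of_nat_add of_nat_mult of_nat_1 of_nat_numeral)
qed

lemma phases_imp_multiplicity_two_eq:
  fixes s :: "nat \<Rightarrow> real" and d e :: nat
  assumes "d > 0" "e > 0"
    and lim_d: "(\<lambda>j. exp (\<i> * of_real (s j * d))) \<longlonglongrightarrow> -1"
    and lim_de: "(\<lambda>j. exp (\<i> * of_real (s j * (d + e)))) \<longlonglongrightarrow> 1"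
  shows "multiplicity (2::nat) d = multiplicity 2 e"
proof (rule ccontr)
  assume "multiplicity (2::nat) d \<noteq> multiplicity 2 e"
  then obtain x y :: nat where "odd y" and xy: "x * (d + e) = y * d"
    using multiplicity_two_neq_imp_odd_multiple assms(1,2) by metis
  have "(\<lambda>j. exp (\<i> * of_real (s j * d)) ^ y) \<longlonglongrightarrow> (-1) ^ y"
    by (intro tendsto_power lim_d)
  moreover have "(\<lambda>j. exp (\<i> * of_real (s j * (d + e))) ^ x) \<longlonglongrightarrow> 1 ^ x"
    by (intro tendsto_power lim_de)
  moreover have "exp (\<i> * of_real (s j * (d + e))) ^ x = exp (\<i> * of_real (s j * d)) ^ y" for j
  proof -
    have "real x * real (d + e) = real y * real d"
      using arg_cong[OF xy, of real] by (simp only: of_nat_mult)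
    then show ?thesis
      by (simp only: exp_i_mult_of_nat[symmetric])
  qed
  ultimately have "(-1::complex) ^ y = 1"
    using LIMSEQ_unique by fastforce
  then show False
    using \<open>odd y\<close> by simp
qed

lemma exp_half_odd_phase:
  fixes d N :: nat and j z :: int
  assumes "N > 0" "2 * int d * j = int N * (2 * z + 1)"
  shows "exp (\<i> * of_real (2 * pi * of_int j / real N)) ^ N = 1"
    "exp (\<i> * of_real (2 * pi * of_int j / real N)) ^ d = -1"
proof -
  show "exp (\<i> * of_real (2 * pi * of_int j / real N)) ^ N = 1"
    using assms(1) exp_i_two_pi_int[of j] by (simp add: exp_of_nat_mult[symmetric])
  have "2 * real d * of_int j = real N * (2 * of_int z + 1)"
    using arg_cong[OF assms(2), of real_of_int] by simp
  then have "real d * (2 * pi * of_int j / real N) = 2 * pi * of_int z + pi"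
    using assms(1) by (simp add: field_simps)
  then have "exp (\<i> * of_real (2 * pi * of_int j / real N)) ^ d
      = exp (\<i> * of_real (2 * pi * of_int z)) * exp (\<i> * of_real pi)"
    using exp_i_mult_of_nat[of 1 d "2 * pi * of_int j / real N"] by (simp only: mult_1 of_real_add distrib_left exp_add)
  then show "exp (\<i> * of_real (2 * pi * of_int j / real N)) ^ d = -1"
    by (simp only: exp_i_two_pi_int) (simp add: exp_pi_i')
qed

text \<open>The phases \<open>1\<close> at the roots and \<open>-1\<close> at \<open>d\<close> are compatible with \<open>a + b + c = d + e\<close>
  exactly when \<open>d\<close> and \<open>e\<close> have the same \<open>2\<close>-adic valuation: then \<open>d j / (d + e)\<close> is a half-odd
  integer for some \<open>j\<close>, and we aim for the phase \<open>2 \<pi> j / (d + e)\<close> at \<open>a / (d + e)\<close>.\<close>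

lemma Kronecker_root_phases:
  fixes a b c :: real and d e :: nat
  assumes indep: "\<And>u\<^sub>1 u\<^sub>2 u\<^sub>3 :: int. of_int u\<^sub>1 * a + of_int u\<^sub>2 * b + of_int u\<^sub>3 * c = 0 \<Longrightarrow> u\<^sub>1 = 0 \<and> u\<^sub>2 = 0 \<and> u\<^sub>3 = 0"
    and sum: "a + b + c = real (d + e)" and "d > 0" "e > 0"
    and nu: "multiplicity (2::nat) d = multiplicity 2 e"
  obtains s :: "nat \<Rightarrow> real" where
    "(\<lambda>n. exp (\<i> * of_real (s n * a))) \<longlonglongrightarrow> 1" "(\<lambda>n. exp (\<i> * of_real (s n * b))) \<longlonglongrightarrow> 1"
    "(\<lambda>n. exp (\<i> * of_real (s n * c))) \<longlonglongrightarrow> 1" "(\<lambda>n. exp (\<i> * of_real (s n * d))) \<longlonglongrightarrow> -1"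
proof -
  obtain j z :: int where jz: "2 * int d * j = int (d + e) * (2 * z + 1)"
    using multiplicity_two_eq_imp_half_odd_multiple[OF assms(3-5)] by blast
  define N where "N = d + e"
  have "N > 0" and sum_N: "a + b + c = real N"
    using assms(3) sum by (simp_all add: N_def)
  define \<theta> where "\<theta> i = [a, b, c] ! i / real N" for i
  define \<beta> where "\<beta> i = (if i = 0 then 2 * pi * of_int j / real N else 0)" for i :: nat
  have three: "(\<Sum>i<3. f i) = f 0 + f 1 + f (2::nat)" for f :: "nat \<Rightarrow> real"
    by (simp add: numeral_3_eq_3 numeral_2_eq_2 lessThan_Suc)
  have indep_\<theta>: "\<forall>i<3. u i = 0" if "(\<Sum>i<3. of_int (u i) * \<theta> i) = 0" for u :: "nat \<Rightarrow> int"
  proof -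
    have "of_int (u 0) * a + of_int (u 1) * b + of_int (u 2) * c = 0"
      using that \<open>N > 0\<close> by (simp add: three \<theta>_def add_divide_distrib[symmetric])
    then show ?thesis
      using indep[of "u 0" "u 1" "u 2"] by (auto simp: numeral_3_eq_3 numeral_2_eq_2 less_Suc_eq)
  qed
  obtain s where lim: "\<And>i. i < 3 \<Longrightarrow> (\<lambda>n. exp (\<i> * of_real (s n * \<theta> i))) \<longlonglongrightarrow> exp (\<i> * of_real (\<beta> i))"
    using Kronecker_exp_tendsto[OF indep_\<theta>, where \<beta> = \<beta>] by blast
  have N_\<theta>: "a = real N * \<theta> 0" "b = real N * \<theta> 1" "c = real N * \<theta> 2" "real d = real d * (\<theta> 0 + \<theta> 1 + \<theta> 2)"
    using \<open>N > 0\<close> sum_N by (simp_all add: \<theta>_def add_divide_distrib[symmetric])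
  have root_limit: "(\<lambda>n. exp (\<i> * of_real (s n * (real N * \<theta> i)))) \<longlonglongrightarrow> exp (\<i> * of_real (\<beta> i)) ^ N"
    if "i < 3" for i
    unfolding exp_i_mult_of_nat by (intro tendsto_power lim that)
  have \<beta>0_N: "exp (\<i> * of_real (\<beta> 0)) ^ N = 1" and \<beta>0_d: "exp (\<i> * of_real (\<beta> 0)) ^ d = -1"
    using exp_half_odd_phase[OF \<open>N > 0\<close>] jz by (simp_all add: \<beta>_def N_def)
  have "exp (\<i> * of_real (\<beta> 1)) = 1" "exp (\<i> * of_real (\<beta> 2)) = 1"
    by (simp_all add: \<beta>_def)
  then have "(\<lambda>n. (exp (\<i> * of_real (s n * \<theta> 0)) * exp (\<i> * of_real (s n * \<theta> 1)) * exp (\<i> * of_real (s n * \<theta> 2))) ^ d)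
      \<longlonglongrightarrow> -1"
    using tendsto_power[OF tendsto_mult[OF tendsto_mult[OF lim lim] lim], of 0 1 2 d] \<beta>0_d by simp
  then have lim_d: "(\<lambda>n. exp (\<i> * of_real (s n * d))) \<longlonglongrightarrow> -1"
    by (subst N_\<theta>(4)) (simp only: exp_i_mult_of_nat exp_i_mult_add)
  have lim_roots: "(\<lambda>n. exp (\<i> * of_real (s n * (real N * \<theta> i)))) \<longlonglongrightarrow> 1" if "i < 3" for i
    using root_limit[OF that] \<beta>0_N by (cases "i = 0") (simp_all add: \<beta>_def)
  show ?thesis
    by (rule that[OF _ _ _ lim_d]) (subst N_\<theta>, rule lim_roots, simp)+
qed

lemma Kronecker_sqrt_2_phases:
  obtains s :: "nat \<Rightarrow> real" where
    "(\<lambda>n. exp (\<i> * of_real (s n * 1))) \<longlonglongrightarrow> -1" "(\<lambda>n. exp (\<i> * of_real (s n * sqrt 2))) \<longlonglongrightarrow> 1"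
proof -
  define \<theta> where "\<theta> i = (if i = 0 then 1 else sqrt 2)" for i :: nat
  define \<beta> where "\<beta> i = (if i = 0 then pi else 0)" for i :: nat
  have indep: "\<forall>i<2. u i = 0" if "(\<Sum>i<2. of_int (u i) * \<theta> i) = 0" for u :: "nat \<Rightarrow> int"
  proof -
    have rel: "of_int (u 1) * sqrt 2 + of_int (u 0) = 0"
      using that by (simp add: \<theta>_def numeral_2_eq_2)
    then have "u 1 = 0"
      using irrat_no_rat_linear_relation[OF sqrt_2_irrational, of "of_int (u 1)" "of_int (u 0)"] by simp
    then show ?thesis
      using rel by (auto simp: numeral_2_eq_2 less_Suc_eq)
  qed
  obtain s where lim: "\<And>i. i < 2 \<Longrightarrow> (\<lambda>n. exp (\<i> * of_real (s n * \<theta> i))) \<longlonglongrightarrow> exp (\<i> * of_real (\<beta> i))"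
    using Kronecker_exp_tendsto[OF indep, where \<beta> = \<beta>] by blast
  have "(\<lambda>n. exp (\<i> * of_real (s n * 1))) \<longlonglongrightarrow> -1"
    using lim[of 0] by (simp add: \<theta>_def \<beta>_def exp_pi_i')
  moreover have "(\<lambda>n. exp (\<i> * of_real (s n * sqrt 2))) \<longlonglongrightarrow> 1"
    using lim[of 1] by (simp add: \<theta>_def \<beta>_def)
  ultimately show ?thesis
    by (rule that)
qed

section \<open>The double star and its quotient matrix\<close>

lemma finite_dstar_V: "finite (dstar_V k l)"
  by (simp add: dstar_V_def)

lemma dstar_adj_sym: "dstar_adj k l x y \<longleftrightarrow> dstar_adj k l y x"
  by (auto simp: dstar_adj_def)

lemma dstar_neighbours:
  assumes "u \<in> dstar_V k l"
  shows "{w \<in> dstar_V k l. dstar_adj k l u w} =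
    (if u = 0 then {1..k + 1} else if u = 1 then insert 0 {k + 2..k + l + 1} else if u \<le> k + 1 then {0} else {1})"
  using assms by (auto simp: dstar_V_def dstar_adj_def dstar_edge_def)

lemma degree_dstar:
  assumes "u \<in> dstar_V k l"
  shows "degree (dstar_V k l) (dstar_adj k l) u = (if u = 0 then k + 1 else if u = 1 then l + 1 else 1)"
  using assms unfolding degree_def dstar_neighbours[OF assms] by (auto simp: dstar_V_def)

definition dstar_class :: "nat \<Rightarrow> nat \<Rightarrow> nat" where
  "dstar_class k u = (if u = 0 then 0 else if u = 1 then 1 else if u \<le> k + 1 then 2 else 3)"

text \<open>The partition of the vertices into \<open>{x}\<close>, \<open>{y}\<close>, the leaves at \<open>x\<close> and the leaves at \<open>y\<close>
  (classes \<open>0, 1, 2, 3\<close>) is equitable, with the following quotient of the Laplacian.\<close>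

definition dstar_quotient :: "nat \<Rightarrow> nat \<Rightarrow> nat \<Rightarrow> nat \<Rightarrow> complex" where
  "dstar_quotient k l i j =
     [[of_nat k + 1, -1, - of_nat k, 0], [-1, of_nat l + 1, 0, - of_nat l], [-1, 0, 1, 0], [0, -1, 0, 1]] ! i ! j"

lemma sum_lessThan_4: "(\<Sum>j<4. f j) = f 0 + f 1 + f 2 + f (3::nat)"
  by (simp add: numeral_eq_Suc lessThan_Suc add_ac)

lemma mat_mult_vec_dstar_quotient:
  assumes "i < 4"
  shows "mat_mult_vec {..<4} (dstar_quotient k l) t i =
    (if i = 0 then (of_nat k + 1) * t 0 - t 1 - of_nat k * t 2
     else if i = 1 then (of_nat l + 1) * t 1 - t 0 - of_nat l * t 3
     else if i = 2 then t 2 - t 0 else t 3 - t 1)"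
  using assms by (auto simp: mat_mult_vec_def sum_lessThan_4 dstar_quotient_def less_Suc_eq numeral_eq_Suc)

lemma laplacian_dstar_class_vector:
  assumes "u \<in> dstar_V k l"
  shows "mat_mult_vec (dstar_V k l) (laplacian (dstar_V k l) (dstar_adj k l)) (t \<circ> dstar_class k) u
       = mat_mult_vec {..<4} (dstar_quotient k l) t (dstar_class k u)"
proof -
  have x_leaves: "(\<Sum>w\<in>{2..k + 1}. t (dstar_class k w)) = of_nat k * t 2"
    by (simp add: dstar_class_def)
  have y_leaves: "(\<Sum>w\<in>{k + 2..k + l + 1}. t (dstar_class k w)) = of_nat l * t 3"
    by (simp add: dstar_class_def)
  have L: "mat_mult_vec (dstar_V k l) (laplacian (dstar_V k l) (dstar_adj k l)) (t \<circ> dstar_class k) u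
      = of_nat (degree (dstar_V k l) (dstar_adj k l) u) * t (dstar_class k u)
        - (\<Sum>w\<in>{w \<in> dstar_V k l. dstar_adj k l u w}. t (dstar_class k w))"
    using assms by (simp add: laplacian_mult_vec finite_dstar_V)
  consider "u = 0" | "u = 1" | "2 \<le> u" "u \<le> k + 1" | "k + 2 \<le> u" "u \<le> k + l + 1"
    using assms by (force simp: dstar_V_def)
  then show ?thesis
  proof cases
    case 1
    have "{1..k + 1} = insert 1 {2..k + 1}"
      by auto
    then show ?thesis
      unfolding L using 1 assms x_leaves
      by (simp add: dstar_neighbours degree_dstar mat_mult_vec_dstar_quotient dstar_class_def algebra_simps)
  next
    case 2
    then show ?thesis
      unfolding L using assms y_leaves
      by (simp add: dstar_neighbours degree_dstar mat_mult_vec_dstar_quotient dstar_class_def algebra_simps)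
  next
    case 3
    then show ?thesis
      unfolding L using assms
      by (simp add: dstar_neighbours degree_dstar mat_mult_vec_dstar_quotient dstar_class_def)
  next
    case 4
    then show ?thesis
      unfolding L using assms
      by (simp add: dstar_neighbours degree_dstar mat_mult_vec_dstar_quotient dstar_class_def)
  qed
qed

lemma in_eigenspace_dstar_lift:
  assumes "in_eigenspace {..<4} (dstar_quotient k l) \<mu> t"
  shows "in_eigenspace (dstar_V k l) (laplacian (dstar_V k l) (dstar_adj k l)) \<mu> (t \<circ> dstar_class k)"
proof -
  have "dstar_class k u \<in> {..<4}" for u
    by (simp add: dstar_class_def)
  then show ?thesis
    using assms by (simp add: in_eigenspace_def laplacian_dstar_class_vector)
qed

lemma dstar_quotient_annihilated:
  assumes "a + b + c = of_nat (k + l + 4)" "a * b + a * c + b * c = of_nat (k * l + 2 * k + 2 * l + 5)"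
    "a * b * c = of_nat (k + l + 2)" and "i < 4"
  shows "fold (shifted_mult_vec {..<4} (dstar_quotient k l)) [0, a, b, c] t i = 0"
proof -
  define A where "A = mat_mult_vec {..<4} (dstar_quotient k l)"
  have "fold (shifted_mult_vec {..<4} (dstar_quotient k l)) [0, a, b, c] t i
      = A (A (A (A t))) i - of_nat (k + l + 4) * A (A (A t)) i
        + of_nat (k * l + 2 * k + 2 * l + 5) * A (A t) i - of_nat (k + l + 2) * A t i"
    unfolding fold_shifted_mult_vec_four A_def using assms(1-3) by simp
  also have "\<dots> = 0"
  proof -
    have "i = 0 \<or> i = 1 \<or> i = 2 \<or> i = 3"
      using \<open>i < 4\<close> by auto
    then show ?thesis
      by (elim disjE) (simp_all add: A_def mat_mult_vec_dstar_quotient algebra_simps)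
  qed
  finally show ?thesis .
qed

text \<open>With \<open>q\<^sub>k(\<theta>) = \<theta>\<^sup>2 - (k + 2) \<theta> + 1\<close> one has \<open>q\<^sub>k(\<theta>) q\<^sub>l(\<theta>) - (1 - \<theta>)\<^sup>2 = \<theta> p(\<theta>)\<close>,
  which is what makes the following vector an eigenvector at every root \<open>\<theta>\<close> of \<open>p\<close>.\<close>

definition dstar_root_vector :: "nat \<Rightarrow> complex \<Rightarrow> nat \<Rightarrow> complex" where
  "dstar_root_vector k \<theta> i =
     (let q = \<theta>\<^sup>2 - (of_nat k + 2) * \<theta> + 1 in [(1 - \<theta>)\<^sup>2, (1 - \<theta>) * q, 1 - \<theta>, q] ! i)"

lemma in_eigenspace_dstar_root_vector:
  assumes "dstar_cubic k l \<theta> = 0"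
  shows "in_eigenspace {..<4} (dstar_quotient k l) \<theta> (dstar_root_vector k \<theta>)"
  unfolding in_eigenspace_def
proof
  fix i :: nat assume "i \<in> {..<4}"
  then have "i = 0 \<or> i = 1 \<or> i = 2 \<or> i = 3"
    by auto
  moreover have "mat_mult_vec {..<4} (dstar_quotient k l) (dstar_root_vector k \<theta>) 1 - \<theta> * dstar_root_vector k \<theta> 1
      = \<theta> * dstar_cubic k l \<theta>"
    by (simp add: mat_mult_vec_dstar_quotient dstar_root_vector_def dstar_cubic_def power2_eq_square) algebra
  then have "mat_mult_vec {..<4} (dstar_quotient k l) (dstar_root_vector k \<theta>) 1 = \<theta> * dstar_root_vector k \<theta> 1"
    using assms by simp
  ultimately show "mat_mult_vec {..<4} (dstar_quotient k l) (dstar_root_vector k \<theta>) i = \<theta> * dstar_root_vector k \<theta> i"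
    by (elim disjE) (simp_all add: mat_mult_vec_dstar_quotient dstar_root_vector_def algebra_simps power2_eq_square)
qed

lemma dstar_root_vector_nonzero:
  assumes "dstar_cubic k l \<theta> = 0" "\<theta> \<noteq> 1"
  shows "dstar_root_vector k \<theta> 0 \<noteq> 0" "dstar_root_vector k \<theta> 3 \<noteq> 0"
proof -
  have "(\<theta>\<^sup>2 - (of_nat k + 2) * \<theta> + 1) * (\<theta>\<^sup>2 - (of_nat l + 2) * \<theta> + 1) - (1 - \<theta>)\<^sup>2
      = \<theta> * dstar_cubic k l \<theta>"
    by (simp add: dstar_cubic_def power2_eq_square) algebra
  then have "(\<theta>\<^sup>2 - (of_nat k + 2) * \<theta> + 1) * (\<theta>\<^sup>2 - (of_nat l + 2) * \<theta> + 1) = (1 - \<theta>)\<^sup>2"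
    using assms(1) by simp
  then show "dstar_root_vector k \<theta> 0 \<noteq> 0" "dstar_root_vector k \<theta> 3 \<noteq> 0"
    using assms(2) by (auto simp: dstar_root_vector_def)
qed

lemma of_real_dstar_cubic: "of_real (dstar_cubic k l x) = dstar_cubic k l (of_real x :: 'a::{real_algebra_1, comm_ring_1})"
  by (simp add: dstar_cubic_def)

section \<open>State transfer in the double cover of the double star\<close>

lemma dstar_pgst_imp_phases:
  assumes "k \<ge> 1" "l \<ge> 1" "v \<in> dstar_V k l" "dstar_class k v \<in> {0, 3}"
    and "laplacian_pgst (blowup2_V (dstar_V k l)) (blowup2_adj (dstar_adj k l)) (0, v) (1, v)"
  obtains s :: "nat \<Rightarrow> real" where
    "(\<lambda>j. exp (\<i> * of_real (s j * degree (dstar_V k l) (dstar_adj k l) v))) \<longlonglongrightarrow> -1"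
    "\<And>\<theta>. dstar_cubic k l \<theta> = 0 \<Longrightarrow> (\<lambda>j. exp (\<i> * of_real (s j * \<theta>))) \<longlonglongrightarrow> 1"
    "\<And>\<theta> h. in_eigenspace (dstar_V k l) (laplacian (dstar_V k l) (dstar_adj k l)) (of_real \<theta>) h \<Longrightarrow> h v \<noteq> 0 \<Longrightarrow>
       (\<lambda>j. exp (\<i> * of_real (s j * \<theta>))) \<longlonglongrightarrow> 1"
proof -
  obtain s :: "nat \<Rightarrow> real" where
    deg: "(\<lambda>j. exp (\<i> * of_real (s j * degree (dstar_V k l) (dstar_adj k l) v))) \<longlonglongrightarrow> -1"
    and eig: "\<And>\<theta> h. in_eigenspace (dstar_V k l) (laplacian (dstar_V k l) (dstar_adj k l)) (of_real \<theta>) h \<Longrightarrow> h v \<noteq> 0 \<Longrightarrow>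
       (\<lambda>j. exp (\<i> * of_real (s j * \<theta>))) \<longlonglongrightarrow> 1"
    using blowup2_pgst_imp_phases[OF finite_dstar_V assms(3) dstar_adj_sym assms(5)] by blast
  have roots: "(\<lambda>j. exp (\<i> * of_real (s j * \<theta>))) \<longlonglongrightarrow> 1" if "dstar_cubic k l \<theta> = 0" for \<theta>
  proof (rule eig)
    have root: "dstar_cubic k l (of_real \<theta> :: complex) = 0"
      using that of_real_dstar_cubic[of k l \<theta>] by simp
    show "in_eigenspace (dstar_V k l) (laplacian (dstar_V k l) (dstar_adj k l)) (of_real \<theta>)
        (dstar_root_vector k (of_real \<theta>) \<circ> dstar_class k)"
      by (intro in_eigenspace_dstar_lift in_eigenspace_dstar_root_vector root)
    have "\<theta> \<noteq> 1"
      using that assms(1,2) by (auto simp: dstar_cubic_def)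
    then show "(dstar_root_vector k (of_real \<theta>) \<circ> dstar_class k) v \<noteq> 0"
      using dstar_root_vector_nonzero[OF root] assms(4) by auto
  qed
  show ?thesis
    by (rule that[OF deg roots eig])
qed

lemma dstar_pgst_if_phases:
  fixes s :: "nat \<Rightarrow> real"
  assumes "k \<ge> 1" "l \<ge> 1" "v \<in> dstar_V k l"
    and class_v: "\<And>x. x \<in> dstar_V k l \<Longrightarrow> dstar_class k x = dstar_class k v \<Longrightarrow> x = v"
    and roots: "\<And>\<theta>. dstar_cubic k l \<theta> = 0 \<Longrightarrow> (\<lambda>n. exp (\<i> * of_real (s n * \<theta>))) \<longlonglongrightarrow> 1"
    and deg: "(\<lambda>n. exp (\<i> * of_real (s n * degree (dstar_V k l) (dstar_adj k l) v))) \<longlonglongrightarrow> -1"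
  shows "laplacian_pgst (blowup2_V (dstar_V k l)) (blowup2_adj (dstar_adj k l)) (0, v) (1, v)"
proof -
  obtain a b c :: real where abc: "a < b" "b < c" and roots_abc: "\<And>x. dstar_cubic k l x = 0 \<longleftrightarrow> x = a \<or> x = b \<or> x = c"
    and "a + b + c = real (k + l + 4)" "a * b + a * c + b * c = real (k * l + 2 * k + 2 * l + 5)"
    "a * b * c = real (k + l + 2)"
    by (rule dstar_cubic_roots[OF assms(1,2)]) blast
  then have vieta: "complex_of_real a + of_real b + of_real c = of_nat (k + l + 4)"
    "of_real a * of_real b + of_real a * of_real c + of_real b * of_real c = (of_nat (k * l + 2 * k + 2 * l + 5) :: complex)"
    "of_real a * of_real b * of_real c = (of_nat (k + l + 2) :: complex)"
    by (metis of_real_add of_real_mult of_real_of_nat_eq)+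
  have "0 \<notin> {a, b, c}"
    using roots_abc[of 0] by (auto simp: dstar_cubic_def)
  then have distinct: "distinct (map complex_of_real [0, a, b, c])"
    using abc by auto
  define t :: "nat \<Rightarrow> complex" where "t i = (if i = dstar_class k v then 1 else 0)" for i
  have "\<forall>i\<in>{..<4}. fold (shifted_mult_vec {..<4} (dstar_quotient k l)) (map complex_of_real [0, a, b, c]) t i = 0"
    using dstar_quotient_annihilated[OF vieta] by simp
  then obtain \<psi> where dec: "\<forall>i\<in>{..<4}. t i = (\<Sum>y\<in>set (map complex_of_real [0, a, b, c]). \<psi> y i)"
    and eig: "\<forall>y\<in>set (map complex_of_real [0, a, b, c]). in_eigenspace {..<4} (dstar_quotient k l) y (\<psi> y)"
    using eigenspace_decomposition[OF distinct] by blast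
  show ?thesis
  proof (rule blowup2_pgst_if_phases[OF finite_dstar_V assms(3), where J = "{0, a, b, c}" and \<theta> = id
        and h = "\<lambda>\<theta>. \<psi> (of_real \<theta>) \<circ> dstar_class k"])
    fix \<theta> assume "\<theta> \<in> {0, a, b, c}"
    then show "in_eigenspace (dstar_V k l) (laplacian (dstar_V k l) (dstar_adj k l)) (of_real (id \<theta>))
        (\<psi> (of_real \<theta>) \<circ> dstar_class k)"
      using eig by (auto intro: in_eigenspace_dstar_lift)
    show "(\<lambda>n. exp (\<i> * of_real (s n * id \<theta>))) \<longlonglongrightarrow> 1"
      using \<open>\<theta> \<in> {0, a, b, c}\<close> roots roots_abc by auto
  next
    fix x assume "x \<in> dstar_V k l"
    have "(\<Sum>\<theta>\<in>{0, a, b, c}. (\<psi> (of_real \<theta>) \<circ> dstar_class k) x)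
        = (\<Sum>y\<in>set (map complex_of_real [0, a, b, c]). \<psi> y (dstar_class k x))"
      unfolding list.set_map by (subst sum.reindex) (auto simp: inj_on_def)
    also have "\<dots> = t (dstar_class k x)"
      using dec by (simp add: dstar_class_def)
    also have "\<dots> = (if x = v then 1 else 0)"
      using class_v \<open>x \<in> dstar_V k l\<close> by (auto simp: t_def)
    finally show "(\<Sum>\<theta>\<in>{0, a, b, c}. (\<psi> (of_real \<theta>) \<circ> dstar_class k) x) = (if x = v then 1 else 0)" .
  qed (use deg in simp_all)
qed

lemma tendsto_exp_dstar_root_sum:
  assumes "k \<ge> 1" "l \<ge> 1" and roots: "\<And>\<theta>. dstar_cubic k l \<theta> = 0 \<Longrightarrow> (\<lambda>n. exp (\<i> * of_real (s n * \<theta>))) \<longlonglongrightarrow> 1"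
  shows "(\<lambda>n. exp (\<i> * of_real (s n * real (k + l + 4)))) \<longlonglongrightarrow> 1"
proof -
  obtain a b c :: real where abc: "\<And>x. dstar_cubic k l x = 0 \<longleftrightarrow> x = a \<or> x = b \<or> x = c"
    and sum: "a + b + c = real (k + l + 4)"
    by (rule dstar_cubic_roots[OF assms(1,2)]) blast
  have "(\<lambda>n. exp (\<i> * of_real (s n * a)) * exp (\<i> * of_real (s n * b)) * exp (\<i> * of_real (s n * c))) \<longlonglongrightarrow> 1 * 1 * 1"
    using abc by (intro tendsto_mult roots) auto
  then show ?thesis
    by (simp only: exp_i_mult_add[symmetric] sum mult_1)
qed

lemma dstar_irreducible_root_phases:
  fixes d e :: nat
  assumes "k \<ge> 1" "l \<ge> 1" "irreducible (dstar_p k l)"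
    and "d > 0" "e > 0" "d + e = k + l + 4" "multiplicity (2::nat) d = multiplicity 2 e"
  obtains s :: "nat \<Rightarrow> real" where
    "\<And>\<theta>. dstar_cubic k l \<theta> = 0 \<Longrightarrow> (\<lambda>n. exp (\<i> * of_real (s n * \<theta>))) \<longlonglongrightarrow> 1"
    "(\<lambda>n. exp (\<i> * of_real (s n * d))) \<longlonglongrightarrow> -1"
proof -
  obtain a b c :: real where "a < b" "b < c" and abc: "\<And>x. dstar_cubic k l x = 0 \<longleftrightarrow> x = a \<or> x = b \<or> x = c"
    and vieta: "a + b + c = real (k + l + 4)" "a * b + a * c + b * c = real (k * l + 2 * k + 2 * l + 5)"
    "a * b * c = real (k + l + 2)"
    by (rule dstar_cubic_roots[OF assms(1,2)]) blast
  have irrat: "x \<notin> \<rat>" if "x \<in> {a, b, c}" for x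
  proof
    assume "x \<in> \<rat>"
    then obtain q where "x = of_rat q"
      by (auto elim: Rats_cases)
    then have "poly (dstar_p k l) q = 0"
      using abc[of x] that of_rat_dstar_cubic[of k l q, where 'a = real] by (auto simp: poly_dstar_p)
    then show False
      using assms(3) by (simp add: irreducible_cubic_iff_no_root degree_dstar_p)
  qed
  have "u\<^sub>1 = 0 \<and> u\<^sub>2 = 0 \<and> u\<^sub>3 = 0" if "of_int u\<^sub>1 * a + of_int u\<^sub>2 * b + of_int u\<^sub>3 * c = 0" for u\<^sub>1 u\<^sub>2 u\<^sub>3
    by (rule cubic_roots_int_independent[OF _ _ _ irrat irrat irrat _ _ that]) (use vieta \<open>a < b\<close> in simp_all)
  moreover have "a + b + c = real (d + e)"
    using vieta assms(6) by simp
  ultimately obtain s where lim_abc: "(\<lambda>n. exp (\<i> * of_real (s n * a))) \<longlonglongrightarrow> 1"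
    "(\<lambda>n. exp (\<i> * of_real (s n * b))) \<longlonglongrightarrow> 1" "(\<lambda>n. exp (\<i> * of_real (s n * c))) \<longlonglongrightarrow> 1"
    and lim_d: "(\<lambda>n. exp (\<i> * of_real (s n * d))) \<longlonglongrightarrow> -1"
    by (rule Kronecker_root_phases[OF _ _ assms(4,5,7)])
  show ?thesis
  proof (rule that[OF _ lim_d])
    fix \<theta> :: real assume "dstar_cubic k l \<theta> = 0"
    then show "(\<lambda>n. exp (\<i> * of_real (s n * \<theta>))) \<longlonglongrightarrow> 1"
      using abc lim_abc by auto
  qed
qed

lemma degree_dstar_centre: "degree (dstar_V k l) (dstar_adj k l) 0 = k + 1"
  using degree_dstar[of 0 k l] by (simp add: dstar_V_def)

lemma degree_dstar_y_leaf: "k + 2 \<le> w \<Longrightarrow> w \<le> k + l + 1 \<Longrightarrow> degree (dstar_V k l) (dstar_adj k l) w = 1"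
  using degree_dstar[of w k l] by (simp add: dstar_V_def)

lemma pgst_dstar_centre_iff:
  assumes "k \<ge> 1" "l \<ge> 1"
  shows "laplacian_pgst (blowup2_V (dstar_V k l)) (blowup2_adj (dstar_adj k l)) (0, 0) (1, 0)
     \<longleftrightarrow> irreducible (dstar_p k l) \<and> multiplicity (2::nat) (k + 1) = multiplicity (2::nat) (l + 3)"
proof
  assume pgst: "laplacian_pgst (blowup2_V (dstar_V k l)) (blowup2_adj (dstar_adj k l)) (0, 0) (1, 0)"
  show "irreducible (dstar_p k l) \<and> multiplicity (2::nat) (k + 1) = multiplicity (2::nat) (l + 3)"
  proof (rule dstar_pgst_imp_phases[OF assms _ _ pgst])
    fix s :: "nat \<Rightarrow> real"
    assume deg: "(\<lambda>j. exp (\<i> * of_real (s j * degree (dstar_V k l) (dstar_adj k l) 0))) \<longlonglongrightarrow> -1"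
      and roots: "\<And>\<theta>. dstar_cubic k l \<theta> = 0 \<Longrightarrow> (\<lambda>j. exp (\<i> * of_real (s j * \<theta>))) \<longlonglongrightarrow> 1"
    have "k \<noteq> l"
    proof
      assume "k = l"
      then have "(\<lambda>j. exp (\<i> * of_real (s j * degree (dstar_V k l) (dstar_adj k l) 0))) \<longlonglongrightarrow> 1"
        by (intro roots) (simp add: degree_dstar_centre dstar_cubic_def)
      then show False
        using deg LIMSEQ_unique by fastforce
    qed
    moreover have "multiplicity (2::nat) (k + 1) = multiplicity 2 (l + 3)"
      using phases_imp_multiplicity_two_eq[of "k + 1" "l + 3" s] deg tendsto_exp_dstar_root_sum[OF assms roots]
      by (simp add: degree_dstar_centre add_ac)
    ultimately show ?thesis
      using irreducible_dstar_p_iff[OF assms] by simp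
  qed (simp_all add: dstar_V_def dstar_class_def)
next
  assume "irreducible (dstar_p k l) \<and> multiplicity (2::nat) (k + 1) = multiplicity (2::nat) (l + 3)"
  then obtain s where roots: "\<And>\<theta>. dstar_cubic k l \<theta> = 0 \<Longrightarrow> (\<lambda>n. exp (\<i> * of_real (s n * \<theta>))) \<longlonglongrightarrow> 1"
    and deg: "(\<lambda>n. exp (\<i> * of_real (s n * real (k + 1)))) \<longlonglongrightarrow> -1"
    using dstar_irreducible_root_phases[OF assms, of "k + 1" "l + 3"] by auto
  show "laplacian_pgst (blowup2_V (dstar_V k l)) (blowup2_adj (dstar_adj k l)) (0, 0) (1, 0)"
  proof (rule dstar_pgst_if_phases[OF assms _ _ roots])
    show "(\<lambda>n. exp (\<i> * of_real (s n * degree (dstar_V k l) (dstar_adj k l) 0))) \<longlonglongrightarrow> -1"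
      using deg by (simp only: degree_dstar_centre)
  qed (auto simp: dstar_V_def dstar_class_def split: if_splits)
qed

lemma dstar_cubic_1_1: "dstar_cubic 1 1 x = 0 \<longleftrightarrow> x = 2 \<or> x = 2 + sqrt 2 \<or> x = 2 - sqrt 2"
proof -
  have "dstar_cubic 1 1 x = (x - 2) * (x - (2 + sqrt 2)) * (x - (2 - sqrt 2))"
    by (simp add: dstar_cubic_def algebra_simps)
  then show ?thesis
    by simp
qed

lemma pgst_dstar_y_leaf_iff:
  assumes "k \<ge> 1" "l \<ge> 1" "k + 2 \<le> w" "w \<le> k + l + 1"
  shows "laplacian_pgst (blowup2_V (dstar_V k l)) (blowup2_adj (dstar_adj k l)) (0, w) (1, w) \<longleftrightarrow> l = 1 \<and> odd k"
proof
  assume pgst: "laplacian_pgst (blowup2_V (dstar_V k l)) (blowup2_adj (dstar_adj k l)) (0, w) (1, w)"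
  have w: "w \<in> dstar_V k l" "dstar_class k w \<in> {0, 3}"
    using assms(3,4) by (simp_all add: dstar_V_def dstar_class_def)
  show "l = 1 \<and> odd k"
  proof (rule dstar_pgst_imp_phases[OF assms(1,2) w pgst])
    fix s :: "nat \<Rightarrow> real"
    assume deg: "(\<lambda>j. exp (\<i> * of_real (s j * degree (dstar_V k l) (dstar_adj k l) w))) \<longlonglongrightarrow> -1"
      and roots: "\<And>\<theta>. dstar_cubic k l \<theta> = 0 \<Longrightarrow> (\<lambda>j. exp (\<i> * of_real (s j * \<theta>))) \<longlonglongrightarrow> 1"
      and eig: "\<And>\<theta> h. in_eigenspace (dstar_V k l) (laplacian (dstar_V k l) (dstar_adj k l)) (of_real \<theta>) h \<Longrightarrow>
        h w \<noteq> 0 \<Longrightarrow> (\<lambda>j. exp (\<i> * of_real (s j * \<theta>))) \<longlonglongrightarrow> 1"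
    have deg1: "(\<lambda>j. exp (\<i> * of_real (s j * 1))) \<longlonglongrightarrow> -1"
      using deg by (simp add: degree_dstar_y_leaf[OF assms(3,4)])
    have "l = 1"
    proof (rule ccontr)
      assume "l \<noteq> 1"
      define w' where "w' = (if w = k + 2 then k + 3 else k + 2)"
      have w': "w' \<in> dstar_V k l" "w' \<noteq> w" "k + 2 \<le> w'" "w' \<le> k + l + 1"
        using assms \<open>l \<noteq> 1\<close> by (auto simp: w'_def dstar_V_def)
      have "in_eigenspace (dstar_V k l) (laplacian (dstar_V k l) (dstar_adj k l))
          (of_nat (degree (dstar_V k l) (dstar_adj k l) w)) (vertex_diff w w')"
        using assms w' by (intro in_eigenspace_laplacian_vertex_diff)
          (auto simp: finite_dstar_V w(1) degree_dstar_y_leaf dstar_adj_def dstar_edge_def)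
      then have "(\<lambda>j. exp (\<i> * of_real (s j * 1))) \<longlonglongrightarrow> 1"
        using eig[of 1 "vertex_diff w w'"] by (simp add: degree_dstar_y_leaf[OF assms(3,4)] vertex_diff_def)
      then show False
        using deg1 LIMSEQ_unique by fastforce
    qed
    moreover have "multiplicity (2::nat) 1 = multiplicity 2 (k + 4)"
      using phases_imp_multiplicity_two_eq[of 1 "k + 4" s] deg1 tendsto_exp_dstar_root_sum[OF assms(1,2) roots]
        \<open>l = 1\<close> by (simp add: add_ac)
    then have "odd (k + 4)"
      by (simp add: multiplicity_eq_zero_iff)
    ultimately show ?thesis
      by simp
  qed
next
  assume "l = 1 \<and> odd k"
  then have "l = 1" "odd k" by simp_all
  obtain s :: "nat \<Rightarrow> real" where roots: "\<And>\<theta>. dstar_cubic k l \<theta> = 0 \<Longrightarrow> (\<lambda>n. exp (\<i> * of_real (s n * \<theta>))) \<longlonglongrightarrow> 1"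
    and deg1: "(\<lambda>n. exp (\<i> * of_real (s n * 1))) \<longlonglongrightarrow> -1"
  proof (cases "k = 1")
    case True
    obtain s :: "nat \<Rightarrow> real" where lim1: "(\<lambda>n. exp (\<i> * of_real (s n * 1))) \<longlonglongrightarrow> -1"
      and lim_sqrt: "(\<lambda>n. exp (\<i> * of_real (s n * sqrt 2))) \<longlonglongrightarrow> 1"
      by (rule Kronecker_sqrt_2_phases)
    have "exp (\<i> * of_real (s n * 2)) = exp (\<i> * of_real (s n * 1)) ^ 2" for n
      using exp_i_mult_of_nat[of "s n" 2 1] by simp
    then have lim2: "(\<lambda>n. exp (\<i> * of_real (s n * 2))) \<longlonglongrightarrow> 1"
      using tendsto_power[OF lim1, of 2] by simp
    have "(\<lambda>n. exp (\<i> * of_real (s n * \<theta>))) \<longlonglongrightarrow> 1" if "dstar_cubic 1 1 \<theta> = 0" for \<theta>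
    proof -
      have "\<theta> = 2 \<or> \<theta> = 2 + sqrt 2 \<or> \<theta> = 2 - sqrt 2"
        using that by (simp only: dstar_cubic_1_1)
      moreover have "exp (\<i> * of_real (s n * (2 - sqrt 2))) = exp (\<i> * of_real (s n * 2)) / exp (\<i> * of_real (s n * sqrt 2))"
        for n
        by (simp add: right_diff_distrib exp_diff[symmetric])
      ultimately show ?thesis
        using lim2 tendsto_mult[OF lim2 lim_sqrt] tendsto_divide[OF lim2 lim_sqrt]
        by (auto simp only: exp_i_mult_add mult_1 div_by_1 one_neq_zero not_False_eq_True)
    qed
    then show ?thesis
      using that[of s] lim1 True \<open>l = 1\<close> by simp
  next
    case False
    then have "irreducible (dstar_p k l)"
      using irreducible_dstar_p_iff[OF assms(1,2)] \<open>l = 1\<close> by simp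
    moreover have "multiplicity (2::nat) 1 = multiplicity 2 (k + 4)"
      using \<open>odd k\<close> by (simp add: multiplicity_eq_zero_iff)
    ultimately show ?thesis
      using dstar_irreducible_root_phases[OF assms(1,2), of 1 "k + 4"] that \<open>l = 1\<close> by auto
  qed
  show "laplacian_pgst (blowup2_V (dstar_V k l)) (blowup2_adj (dstar_adj k l)) (0, w) (1, w)"
  proof (rule dstar_pgst_if_phases[OF assms(1,2) _ _ roots])
    show "(\<lambda>n. exp (\<i> * of_real (s n * degree (dstar_V k l) (dstar_adj k l) w))) \<longlonglongrightarrow> -1"
      using deg1 by (simp add: degree_dstar_y_leaf[OF assms(3,4)])
  qed (use assms \<open>l = 1\<close> in \<open>auto simp: dstar_V_def dstar_class_def split: if_splits\<close>)
qed

theorem theorem9: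
  fixes k l :: nat
  assumes "k \<ge> 1" and "l \<ge> 1"
  shows "(laplacian_pgst (blowup2_V (dstar_V k l)) (blowup2_adj (dstar_adj k l)) (0, 0) (1, 0)
            \<longleftrightarrow> irreducible (dstar_p k l) \<and> multiplicity (2::nat) (k + 1) = multiplicity (2::nat) (l + 3))
       \<and> (\<forall>w. k + 2 \<le> w \<and> w \<le> k + l + 1 \<longrightarrow>
            (laplacian_pgst (blowup2_V (dstar_V k l)) (blowup2_adj (dstar_adj k l)) (0, w) (1, w)
             \<longleftrightarrow> l = 1 \<and> odd k \<and>
                 (irreducible (dstar_p k l) \<or> (\<exists>m::int. even m \<and> poly (dstar_p k l) (of_int m) = 0))))"
proof (intro conjI allI impI)
  show "laplacian_pgst (blowup2_V (dstar_V k l)) (blowup2_adj (dstar_adj k l)) (0, 0) (1, 0)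
      \<longleftrightarrow> irreducible (dstar_p k l) \<and> multiplicity (2::nat) (k + 1) = multiplicity (2::nat) (l + 3)"
    by (rule pgst_dstar_centre_iff[OF assms])
next
  fix w assume w: "k + 2 \<le> w \<and> w \<le> k + l + 1"
  have root_condition: "irreducible (dstar_p k l) \<or> (\<exists>m::int. even m \<and> poly (dstar_p k l) (of_int m) = 0)" if "l = 1"
  proof (cases "k = 1")
    case True
    then have "poly (dstar_p k l) (of_int 2) = 0"
      using \<open>l = 1\<close> by (simp add: poly_dstar_p dstar_cubic_def)
    then show ?thesis
      by (intro disjI2 exI[of _ 2]) simp
  qed (use irreducible_dstar_p_iff[OF assms] \<open>l = 1\<close> in simp)
  then show "laplacian_pgst (blowup2_V (dstar_V k l)) (blowup2_adj (dstar_adj k l)) (0, w) (1, w)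
      \<longleftrightarrow> l = 1 \<and> odd k \<and> (irreducible (dstar_p k l) \<or> (\<exists>m::int. even m \<and> poly (dstar_p k l) (of_int m) = 0))"
    unfolding pgst_dstar_y_leaf_iff[OF assms conjunct1[OF w] conjunct2[OF w]] by blast
qed

end
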